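(* Let $X_1$ be a random vector in $\mathbb R^d$ such that $0\in\operatorname{int}\mathcal D_{\mathcal L}$. Let $B\subset BV[0,1]$ be such that $\operatorname{cl}_{\rho_1'}(B)=\operatorname{cl}_{\rho_*}(B)$, closures taken in $BV[0,1]$ with respect to the indicated metrics. Then $$\inf_{h\in\operatorname{cl}_{\rho_1'}(B)}I_D(h)=\lim_{\varepsilon\to0+}\inf_{h\in B^\varepsilon_{\rho_1'}}I_D(h),$$ where $B^\varepsilon_{\rho_1'}$ is the open $\varepsilon$-neighbourhood of $B$ in $(BV[0,1],\rho_1')$; and unless $B$ is empty, the infimum on the left-hand side is attained at some $h\in\operatorname{cl}_{\rho_1'}(B)$.
   Context: $\mathcal L(u):=\mathbb Ee^{u\cdot X_1}$, $\mathcal D_{\mathcal L}:=\{u:\mathcal L(u)<\infty\}$, $K:=\log\mathcal L$, $I(v):=\sup_u(u\cdot v-K(u))$. $D[0,1]$: càdlàg functions $[0,1]\to\mathbb R^d$; for finite $\mathbf t\subset(0,1]$, $h^{\mathbf t}$ is the continuous function linear between consecutive points of $\mathbf t\cup\{0,1\}$ with $h^{\mathbf t}(0)=0$, $h^{\mathbf t}(s)=h(s)$ for $s\in\mathbf t\cup\{1\}$. $\operatorname{Var}(h):=\sup_{\mathbf t}\int_0^1|(h^{\mathbf t})'|ds$, $I_D(h):=\sup_{\mathbf t}\int_0^1 I((h^{\mathbf t})')ds$ (suprema over finite $\mathbf t\subset(0,1]$), $BV[0,1]:=\{\operatorname{Var}<\infty\}$. $\rho_*(g,h):=\int_0^1|g-h|ds+|g(1)-h(1)|$.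 Metric $\rho_1'$: for $h\in D[0,1]$ set $h(0-):=0$, $\Gamma'h:=\{(t,x)\in[0,1]\times\mathbb R^d:x\in[h(t-),h(t)]\}$ ($[a,b]$ the segment), $\Pi'(h)$ the set of continuous bijections $\gamma:[0,1]\to\Gamma'h$ with $\gamma(0)=(0,0)$, and $\rho_1'(h_1,h_2):=\inf_{\gamma_i\in\Pi'(h_i)}\sup_t|\gamma_1(t)-\gamma_2(t)|$. $\inf\varnothing:=+\infty$. *)

theory Defs
  imports "HOL-Probability.Probability"
begin

definition Lmgf :: "'b measure \<Rightarrow> ('b \<Rightarrow> 'a::euclidean_space) \<Rightarrow> 'a \<Rightarrow> ennreal" where
  "Lmgf M X u = (\<integral>\<^sup>+ \<omega>. ennreal (exp (u \<bullet> X \<omega>)) \<partial>M)"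

definition DL :: "'b measure \<Rightarrow> ('b \<Rightarrow> 'a::euclidean_space) \<Rightarrow> 'a set" where
  "DL M X = {u. Lmgf M X u < \<infinity>}"

definition Kcum :: "'b measure \<Rightarrow> ('b \<Rightarrow> 'a::euclidean_space) \<Rightarrow> 'a \<Rightarrow> ereal" where
  "Kcum M X u = (if Lmgf M X u = \<infinity> then \<infinity> else ereal (ln (enn2real (Lmgf M X u))))"

definition Irate :: "'b measure \<Rightarrow> ('b \<Rightarrow> 'a::euclidean_space) \<Rightarrow> 'a \<Rightarrow> ereal" where
  "Irate M X v = (SUP u. ereal (u \<bullet> v) - Kcum M X u)"

definition cadlag01 :: "(real \<Rightarrow> 'a::euclidean_space) set" where
  "cadlag01 = {h. (\<forall>t\<in>{0..<1}. continuous (at_right t) h)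
               \<and> (\<forall>t\<in>{0<..1}. \<exists>l. (h \<longlongrightarrow> l) (at_left t))
               \<and> (\<forall>t. t \<notin> {0..1} \<longrightarrow> h t = 0)}"

definition lft :: "(real \<Rightarrow> 'a::euclidean_space) \<Rightarrow> real \<Rightarrow> 'a" where
  "lft h t = (if t = 0 then 0 else Lim (at_left t) h)"

text \<open>Admissible finite subsets t of (0,1], the sorted points of t \<union> {0,1},
  and the values of the polygonal interpolant h^t at these points.\<close>
definition fin_parts :: "real set set" where
  "fin_parts = {T. finite T \<and> T \<subseteq> {0<..1}}"

definition ppts :: "real set \<Rightarrow> real list" where
  "ppts T = sorted_list_of_set (insert 0 (insert 1 T))"

definition pval :: "(real \<Rightarrow> 'a::euclidean_space) \<Rightarrow> real \<Rightarrow> 'a" where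
  "pval h s = (if s = 0 then 0 else h s)"

text \<open>\<integral>_0^1 |(h^t)'| ds, written out for the piecewise linear h^t.\<close>
definition var_sum :: "(real \<Rightarrow> 'a::euclidean_space) \<Rightarrow> real set \<Rightarrow> real" where
  "var_sum h T = (let p = ppts T in
     \<Sum>i<length p - 1. norm (pval h (p ! Suc i) - pval h (p ! i)))"

definition Var :: "(real \<Rightarrow> 'a::euclidean_space) \<Rightarrow> ereal" where
  "Var h = (SUP T\<in>fin_parts. ereal (var_sum h T))"

definition BV01 :: "(real \<Rightarrow> 'a::euclidean_space) set" where
  "BV01 = {h \<in> cadlag01. Var h < \<infinity>}"

text \<open>\<integral>_0^1 I((h^t)') ds, written out for the piecewise linear h^t.\<close>
definition rate_sum :: "'b measure \<Rightarrow> ('b \<Rightarrow> 'a::euclidean_space) \<Rightarrow> (real \<Rightarrow> 'a) \<Rightarrow> real set \<Rightarrow> ereal" where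
  "rate_sum M X h T = (let p = ppts T in
     \<Sum>i<length p - 1. ereal (p ! Suc i - p ! i) *
        Irate M X ((pval h (p ! Suc i) - pval h (p ! i)) /\<^sub>R (p ! Suc i - p ! i)))"

definition ID :: "'b measure \<Rightarrow> ('b \<Rightarrow> 'a::euclidean_space) \<Rightarrow> (real \<Rightarrow> 'a) \<Rightarrow> ereal" where
  "ID M X h = (SUP T\<in>fin_parts. rate_sum M X h T)"

definition rho_star :: "(real \<Rightarrow> 'a::euclidean_space) \<Rightarrow> (real \<Rightarrow> 'a) \<Rightarrow> ereal" where
  "rho_star g h = ereal ((LINT s:{0..1}|lborel. norm (g s - h s)) + norm (g 1 - h 1))"

definition Gamma' :: "(real \<Rightarrow> 'a::euclidean_space) \<Rightarrow> (real \<times> 'a) set" where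
  "Gamma' h = {(t, x). t \<in> {0..1} \<and> x \<in> closed_segment (lft h t) (h t)}"

definition Pi' :: "(real \<Rightarrow> 'a::euclidean_space) \<Rightarrow> (real \<Rightarrow> real \<times> 'a) set" where
  "Pi' h = {\<gamma>. continuous_on {0..1} \<gamma> \<and> bij_betw \<gamma> {0..1} (Gamma' h) \<and> \<gamma> 0 = (0, 0)}"

definition rho1' :: "(real \<Rightarrow> 'a::euclidean_space) \<Rightarrow> (real \<Rightarrow> 'a) \<Rightarrow> ereal" where
  "rho1' h1 h2 = (INF p\<in>Pi' h1 \<times> Pi' h2. SUP t\<in>{0..1}. ereal (norm (fst p t - snd p t)))"

definition mclosure :: "('f \<Rightarrow> 'f \<Rightarrow> ereal) \<Rightarrow> 'f set \<Rightarrow> 'f set \<Rightarrow> 'f set" where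
  "mclosure \<rho> S B = {h \<in> S. \<forall>\<epsilon>>0. \<exists>g\<in>B. \<rho> g h < ereal \<epsilon>}"

definition mnbhd :: "('f \<Rightarrow> 'f \<Rightarrow> ereal) \<Rightarrow> 'f set \<Rightarrow> 'f set \<Rightarrow> real \<Rightarrow> 'f set" where
  "mnbhd \<rho> S B \<epsilon> = {h \<in> S. \<exists>g\<in>B. \<rho> g h < ereal \<epsilon>}"

end

(*
  The infima of I_D over the rho_1'-neighbourhoods B^eps increase as eps decreases, so they
  converge to their supremum L, which is at most the infimum over the closure. Conversely, pick
  h_n in B^(1/n) with I_D(h_n) <= L + 1/n and g_n in B that is 1/n-close to h_n. Since 0 is an
  interior point of D_L, the rate function I grows linearly, so the variations of the h_n are
  bounded. Helly's selection theorem yields a subsequence converging on the rationals; its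
  right-continuous regularisation H satisfies I_D(H) <= L because I is lower semicontinuous.
  Closeness in rho_1' bounds |g_n - h_n| pointwise by the oscillation of h_n on neighbouring cells
  of a grid, and bounded variation makes these oscillations small in L^1; so g_n -> H for rho_*,
  and H lies in the rho_*-closure of B, which by hypothesis is its rho_1'-closure.
*)

theory Submission
  imports Defs "HOL-Library.Sublist" "HOL-Library.Diagonal_Subsequence"
begin

definition list_var :: "(real \<Rightarrow> 'a::real_normed_vector) \<Rightarrow> real list \<Rightarrow> real" where
  "list_var F xs = (\<Sum>i<length xs - 1. norm (F (xs ! Suc i) - F (xs ! i)))"

lemma list_var_Nil [simp]: "list_var F [] = 0"
  and list_var_singleton [simp]: "list_var F [x] = 0"
  by (simp_all add: list_var_def)

lemma list_var_Cons_Cons [simp]: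
  "list_var F (x # y # zs) = norm (F y - F x) + list_var F (y # zs)"
  unfolding list_var_def by (simp add: sum.lessThan_Suc_shift del: sum.lessThan_Suc)

lemma list_var_nonneg: "0 \<le> list_var F xs"
  unfolding list_var_def by (intro sum_nonneg) auto

lemma list_var_Cons_ge: "list_var F xs \<le> list_var F (z # xs)"
  by (cases xs) auto

lemma list_var_append_pair_ge: "list_var F xs + norm (F b - F a) \<le> list_var F (xs @ [a, b])"
  by (induction xs rule: induct_list012) auto

lemma list_var_Cons_subseq_le:
  "subseq xs ys \<Longrightarrow> list_var F (z # xs) \<le> list_var F (z # ys)"
proof (induction xs ys arbitrary: z rule: list_emb.induct)
  case (list_emb_Nil ys)
  then show ?case using list_var_nonneg[of F "z # ys"] by simp
next
  case (list_emb_Cons xs ys y)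
  have "list_var F (z # xs) \<le> norm (F y - F z) + list_var F (y # xs)"
  proof (cases xs)
    case (Cons a as)
    have "norm (F a - F z) \<le> norm (F y - F z) + norm (F a - F y)"
      using norm_triangle_ineq[of "F y - F z" "F a - F y"] by simp
    then show ?thesis using Cons by simp
  qed (simp add: list_var_nonneg)
  also have "\<dots> \<le> norm (F y - F z) + list_var F (y # ys)"
    using list_emb_Cons by simp
  finally show ?case by simp
qed simp

lemma list_var_remdups_adj: "list_var F (remdups_adj xs) = list_var F xs"
proof (induction xs rule: remdups_adj.induct)
  case (3 x y xs)
  show ?case
  proof (cases "x = y")
    case False
    have r: "remdups_adj (y # xs) = y # tl (remdups_adj (y # xs))"
      by (simp add: remdups_adj_Cons_alt)
    have e: "remdups_adj (x # y # xs) = x # y # tl (remdups_adj (y # xs))"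
      using False by (subst r[symmetric]) simp
    have "list_var F (y # tl (remdups_adj (y # xs))) = list_var F (y # xs)"
      using 3 False r by simp
    then show ?thesis by (simp only: e list_var_Cons_Cons)
  qed (use 3 in simp)
qed auto

lemma distinct_remdups_adj_sorted: "sorted xs \<Longrightarrow> distinct (remdups_adj xs)"
proof (induction xs rule: remdups_adj.induct)
  case (3 x y xs)
  show ?case
  proof (cases "x = y")
    case False
    with "3.prems" have "x < y" by (simp add: less_le)
    moreover have "\<forall>z\<in>set (remdups_adj (y # xs)). y \<le> z"
      using "3.prems" by auto
    ultimately have "x \<notin> set (remdups_adj (y # xs))" by force
    then show ?thesis using 3 False by simp
  qed (use 3 in simp)
qed auto

lemma subseq_if_sorted_subset:
  assumes "sorted xs" "distinct xs" "sorted ys" "distinct ys" "set xs \<subseteq> set ys"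
  shows "subseq xs ys"
proof -
  have "filter (\<lambda>x. x \<in> set xs) ys = xs"
    by (rule sorted_distinct_set_unique) (use assms in \<open>auto simp: sorted_wrt_filter\<close>)
  then show ?thesis by (metis subseq_filter_left)
qed

lemma list_var_sorted_subset_le:
  assumes "sorted xs" "sorted ys" "distinct ys" "set xs \<subseteq> set ys" "ys \<noteq> []"
  shows "list_var F xs \<le> list_var F ys"
proof -
  obtain z zs where ys: "ys = z # zs" using assms(5) by (cases ys) auto
  let ?r = "remdups_adj xs"
  have "list_var F xs = list_var F ?r" by (simp add: list_var_remdups_adj)
  also have "\<dots> \<le> list_var F (z # ?r)" by (rule list_var_Cons_ge)
  also have "\<dots> \<le> list_var F (z # ys)"
    by (rule list_var_Cons_subseq_le, rule subseq_if_sorted_subset)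
       (use assms in \<open>auto simp: sorted_remdups_adj distinct_remdups_adj_sorted\<close>)
  also have "\<dots> = list_var F ys" using ys by simp
  finally show ?thesis .
qed

lemma list_var_append_Cons:
  "list_var F (xs @ y # ys) = list_var F (xs @ [y]) + list_var F (y # ys)"
  by (induction xs rule: induct_list012) auto

lemma list_var_rev [simp]: "list_var F (rev xs) = list_var F xs"
proof (induction xs rule: induct_list012)
  case (3 x y zs)
  have "list_var F (rev (x # y # zs)) = list_var F (rev zs @ [y]) + list_var F [y, x]"
    using list_var_append_Cons[of F "rev zs" y "[x]"] by simp
  also have "\<dots> = list_var F (x # y # zs)"
    using "3.IH"(2) by (simp add: norm_minus_commute)
  finally show ?case .
qed auto

lemma list_var_map: "list_var F (map f xs) = list_var (F \<circ> f) xs"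
  by (simp add: list_var_def)

lemma list_var_tendsto:
  assumes "\<And>i. i < length xs \<Longrightarrow> (\<lambda>k. F k (xs ! i)) \<longlonglongrightarrow> G (xs ! i)"
  shows "(\<lambda>k. list_var (F k) xs) \<longlonglongrightarrow> list_var G xs"
  unfolding list_var_def by (intro tendsto_intros assms) auto

definition bounded_var_on :: "(real \<Rightarrow> 'a::real_normed_vector) \<Rightarrow> real set \<Rightarrow> real \<Rightarrow> bool" where
  "bounded_var_on F S V \<longleftrightarrow> (\<forall>xs. sorted xs \<longrightarrow> set xs \<subseteq> S \<longrightarrow> list_var F xs \<le> V)"

lemma bounded_var_on_nonneg: "bounded_var_on F S V \<Longrightarrow> 0 \<le> V"
  unfolding bounded_var_on_def by (drule spec[of _ "[]"]) simp

lemma bounded_var_on_dist: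
  assumes "bounded_var_on F S V" "u \<in> S" "v \<in> S"
  shows "norm (F u - F v) \<le> V"
proof (cases "u \<le> v")
  case True
  then show ?thesis using assms unfolding bounded_var_on_def
    by (auto dest!: spec[of _ "[u, v]"] simp: norm_minus_commute)
next
  case False
  then show ?thesis using assms unfolding bounded_var_on_def by (auto dest!: spec[of _ "[v, u]"])
qed

lemma bounded_var_on_reflect:
  assumes "bounded_var_on F S V"
  shows "bounded_var_on (\<lambda>x. F (- x)) (uminus ` S) V"
  unfolding bounded_var_on_def
proof (intro allI impI)
  fix xs assume xs: "sorted xs" "set xs \<subseteq> uminus ` S"
  have "sorted (rev (map uminus xs))"
    using xs(1) by (auto simp: sorted_wrt_rev sorted_wrt_map elim: sorted_wrt_mono_rel)
  moreover have "set (rev (map uminus xs)) \<subseteq> S" using xs(2) by auto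
  ultimately have "list_var F (rev (map uminus xs)) \<le> V"
    using assms unfolding bounded_var_on_def by blast
  then show "list_var (\<lambda>x. F (- x)) xs \<le> V" by (simp add: list_var_map comp_def)
qed

lemma
  assumes "T \<in> fin_parts"
  shows sorted_ppts: "sorted (ppts T)" and distinct_ppts: "distinct (ppts T)"
    and set_ppts: "set (ppts T) = insert 0 (insert 1 T)"
    and ppts_nth_0: "ppts T ! 0 = 0"
    and ppts_nth_last: "ppts T ! (length (ppts T) - 1) = 1"
    and length_ppts: "length (ppts T) \<ge> 2"
proof -
  have T: "finite T" "T \<subseteq> {0<..1}" using assms by (auto simp: fin_parts_def)
  let ?A = "insert (0::real) (insert 1 T)"
  show s: "sorted (ppts T)" "distinct (ppts T)" by (simp_all add: ppts_def)
  show st: "set (ppts T) = ?A"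
    unfolding ppts_def using T by (subst set_sorted_list_of_set) auto
  have "card {0::real, 1} \<le> card ?A" by (rule card_mono) (use T in auto)
  then have "card (set (ppts T)) \<ge> 2" using st by simp
  then show len: "length (ppts T) \<ge> 2" by (metis card_length le_trans)
  have "ppts T ! i \<in> {0..1}" if "i < length (ppts T)" for i
    using st T that nth_mem[OF that] by auto
  moreover obtain i0 i1 where "i0 < length (ppts T)" "ppts T ! i0 = 0"
    "i1 < length (ppts T)" "ppts T ! i1 = 1"
    using st by (metis insertI1 insertI2 in_set_conv_nth)
  moreover have "ppts T ! 0 \<le> ppts T ! i" "ppts T ! i \<le> ppts T ! (length (ppts T) - 1)"
    if "i < length (ppts T)" for i
    using that s(1) by (auto intro: sorted_nth_mono)
  ultimately show "ppts T ! 0 = 0" "ppts T ! (length (ppts T) - 1) = 1"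
    using len by (smt (verit, best) atLeastAtMost_iff diff_less less_le_trans pos2 zero_less_one)+
qed

lemma empty_fin_parts: "{} \<in> fin_parts"
  by (simp add: fin_parts_def)

lemma fin_parts_of_list: "set xs \<subseteq> {0..1} \<Longrightarrow> set xs - {0} \<in> fin_parts"
  by (auto simp: fin_parts_def)

lemma ppts_of_list:
  assumes "sorted xs" "distinct xs" "set xs \<subseteq> {0..1}" "0 \<in> set xs" "1 \<in> set xs"
  shows "ppts (set xs - {0}) = xs"
proof -
  have "insert 0 (insert 1 (set xs - {0})) = set xs" using assms by auto
  then show ?thesis using assms unfolding ppts_def
    by (simp add: sorted_list_of_set_sort_remdups distinct_remdups_id sorted_sort_id)
qed

lemma var_sum_eq_list_var: "var_sum h T = list_var (pval h) (ppts T)"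
  by (simp add: var_sum_def list_var_def Let_def)

lemma list_var_le_Var:
  assumes "sorted xs" "set xs \<subseteq> {0..1}"
  shows "ereal (list_var (pval h) xs) \<le> Var h"
proof -
  let ?T = "set xs - {0}"
  have T: "?T \<in> fin_parts" using assms(2) by (rule fin_parts_of_list)
  have "list_var (pval h) xs \<le> var_sum h ?T"
    unfolding var_sum_eq_list_var
    by (rule list_var_sorted_subset_le)
       (use assms sorted_ppts[OF T] distinct_ppts[OF T] set_ppts[OF T] in auto)
  also have "ereal (var_sum h ?T) \<le> Var h"
    unfolding Var_def using T by (rule SUP_upper)
  finally show ?thesis by simp
qed

lemma bounded_var_on_if_Var_le: "Var h \<le> ereal V \<Longrightarrow> bounded_var_on (pval h) {0..1} V"
  unfolding bounded_var_on_def using list_var_le_Var by (metis ereal_less_eq(3) order_trans)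

section \<open>The rate function\<close>

lemma Irate_ge: "ereal (u \<bullet> v) - Kcum M X u \<le> Irate M X v"
  unfolding Irate_def by (rule SUP_upper) simp

lemma Kcum_zero: "prob_space M \<Longrightarrow> Kcum M X 0 = 0"
  by (simp add: Kcum_def Lmgf_def prob_space.emeasure_space_1)

lemma Irate_nonneg: "prob_space M \<Longrightarrow> 0 \<le> Irate M X v"
  using Irate_ge[of 0 v M X] by (simp add: Kcum_zero zero_ereal_def)

lemma exists_Basis_inner_ge:
  fixes v :: "'a::euclidean_space"
  obtains b where "b \<in> Basis" "norm v / real DIM('a) \<le> \<bar>v \<bullet> b\<bar>"
proof (rule ccontr)
  assume "\<not> thesis"
  then have less: "\<And>b. b \<in> Basis \<Longrightarrow> \<bar>v \<bullet> b\<bar> < norm v / real DIM('a)"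
    using that by force
  have "(\<Sum>b\<in>Basis. \<bar>v \<bullet> b\<bar>) < (\<Sum>b\<in>(Basis::'a set). norm v / real DIM('a))"
    by (rule sum_strict_mono) (use less in auto)
  then show False using norm_le_l1[of v] by simp
qed

text \<open>Test the supremum defining \<open>I(v)\<close> with \<open>u = \<plusminus>\<rho> b\<close> for the basis vector \<open>b\<close> along which
  \<open>|v \<bullet> b|\<close> is largest; \<open>\<L>\<close> is finite there because \<open>0 \<in> int \<D>\<^sub>\<L>\<close>.\<close>

lemma Irate_ge_linear:
  fixes M :: "'b measure" and X :: "'b \<Rightarrow> 'a::euclidean_space"
  assumes "0 \<in> interior (DL M X)"
  obtains c C where "c > 0" "\<And>v. ereal (c * norm v - C) \<le> Irate M X v"
proof -
  obtain r where r: "r > 0" "ball 0 r \<subseteq> DL M X"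
    using assms by (meson mem_interior)
  define \<rho> where "\<rho> = r / 2"
  have \<rho>: "\<rho> > 0" using r by (simp add: \<rho>_def)
  define k where "k u = ln (enn2real (Lmgf M X u))" for u
  define C where "C = (\<Sum>b\<in>Basis. \<bar>k (\<rho> *\<^sub>R b)\<bar> + \<bar>k (- (\<rho> *\<^sub>R b))\<bar>)"
  define c where "c = \<rho> / real DIM('a)"
  have "ereal (c * norm v - C) \<le> Irate M X v" for v
  proof -
    obtain b where b: "b \<in> Basis" "norm v / real DIM('a) \<le> \<bar>v \<bullet> b\<bar>"
      by (rule exists_Basis_inner_ge)
    define u where "u = (if v \<bullet> b \<ge> 0 then \<rho> *\<^sub>R b else - (\<rho> *\<^sub>R b))"
    have "norm u < r" using b(1) \<rho> by (simp add: u_def \<rho>_def)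
    then have "Kcum M X u = ereal (k u)"
      using r(2) by (auto simp: Kcum_def DL_def k_def)
    moreover have "k u \<le> C"
    proof -
      have "k u \<le> \<bar>k (\<rho> *\<^sub>R b)\<bar> + \<bar>k (- (\<rho> *\<^sub>R b))\<bar>"
        by (auto simp: u_def abs_if)
      also have "\<dots> \<le> C" unfolding C_def by (rule member_le_sum) (use b(1) in auto)
      finally show ?thesis .
    qed
    moreover have "u \<bullet> v = \<rho> * \<bar>v \<bullet> b\<bar>"
      by (simp add: u_def inner_commute abs_if)
    then have "c * norm v \<le> u \<bullet> v"
      using b \<rho> by (simp add: c_def field_simps)
    ultimately have "ereal (c * norm v - C) \<le> ereal (u \<bullet> v) - Kcum M X u" by simp
    also have "\<dots> \<le> Irate M X v" by (rule Irate_ge)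
    finally show ?thesis .
  qed
  moreover have "c > 0" using \<rho> by (simp add: c_def)
  ultimately show thesis using that by blast
qed

text \<open>\<open>\<tau> I(x/\<tau>)\<close> is the contribution to \<open>\<integral> I((h\<^sup>t)')\<close> of a linear piece of duration \<open>\<tau>\<close>
  and increment \<open>x\<close>.\<close>

definition seg_rate :: "'b measure \<Rightarrow> ('b \<Rightarrow> 'a::euclidean_space) \<Rightarrow> real \<Rightarrow> 'a \<Rightarrow> ereal" where
  "seg_rate M X \<tau> x = ereal \<tau> * Irate M X (x /\<^sub>R \<tau>)"

definition list_rate ::
  "'b measure \<Rightarrow> ('b \<Rightarrow> 'a::euclidean_space) \<Rightarrow> (real \<Rightarrow> 'a) \<Rightarrow> real list \<Rightarrow> ereal" where
  "list_rate M X F xs =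
     (\<Sum>i<length xs - 1. seg_rate M X (xs ! Suc i - xs ! i) (F (xs ! Suc i) - F (xs ! i)))"

lemma rate_sum_eq_list_rate: "rate_sum M X h T = list_rate M X (pval h) (ppts T)"
  by (simp add: rate_sum_def list_rate_def seg_rate_def Let_def)

lemma seg_rate_nonneg: "prob_space M \<Longrightarrow> 0 \<le> \<tau> \<Longrightarrow> 0 \<le> seg_rate M X \<tau> x"
  unfolding seg_rate_def by (simp add: Irate_nonneg)

lemma list_rate_nonneg:
  assumes "prob_space M" "sorted xs"
  shows "0 \<le> list_rate M X F xs"
  unfolding list_rate_def
  by (intro sum_nonneg seg_rate_nonneg assms(1)) (use assms(2) in \<open>auto intro: sorted_nth_mono\<close>)

lemma ID_nonneg:
  assumes "prob_space M"
  shows "0 \<le> ID M X h"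
proof -
  have "0 \<le> rate_sum M X h {}"
    unfolding rate_sum_eq_list_rate
    by (rule list_rate_nonneg[OF assms sorted_ppts[OF empty_fin_parts]])
  also have "\<dots> \<le> ID M X h"
    unfolding ID_def by (rule SUP_upper) (rule empty_fin_parts)
  finally show ?thesis .
qed

lemma list_rate_le_ID:
  assumes "sorted_wrt (<) xs" "set xs \<subseteq> {0..1}" "0 \<in> set xs" "1 \<in> set xs"
  shows "list_rate M X (pval h) xs \<le> ID M X h"
proof -
  have "list_rate M X (pval h) xs = rate_sum M X h (set xs - {0})"
    unfolding rate_sum_eq_list_rate using assms by (simp add: ppts_of_list strict_sorted_iff)
  also have "\<dots> \<le> ID M X h"
    unfolding ID_def by (rule SUP_upper) (rule fin_parts_of_list[OF assms(2)])
  finally show ?thesis .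
qed

lemma seg_rate_ge_linear:
  assumes "\<And>v. ereal (c * norm v - C) \<le> Irate M X v" "\<tau> > 0"
  shows "ereal (c * norm x - C * \<tau>) \<le> seg_rate M X \<tau> x"
proof -
  have "ereal \<tau> * ereal (c * norm (x /\<^sub>R \<tau>) - C) \<le> ereal \<tau> * Irate M X (x /\<^sub>R \<tau>)"
    using assms(2) by (intro ereal_mult_left_mono assms(1)) auto
  moreover have "ereal \<tau> * ereal (c * norm (x /\<^sub>R \<tau>) - C) = ereal (c * norm x - C * \<tau>)"
    using assms(2) by (simp add: field_simps)
  ultimately show ?thesis by (simp add: seg_rate_def)
qed

lemma list_rate_ge_linear:
  assumes "\<And>v. ereal (c * norm v - C) \<le> Irate M X v" "sorted_wrt (<) xs"
  shows "ereal (c * list_var F xs - C * (xs ! (length xs - 1) - xs ! 0)) \<le> list_rate M X F xs"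
proof -
  let ?d = "\<lambda>i. xs ! Suc i - xs ! i" and ?n = "\<lambda>i. norm (F (xs ! Suc i) - F (xs ! i))"
  have "c * list_var F xs - C * (xs ! (length xs - 1) - xs ! 0)
      = (\<Sum>i<length xs - 1. c * ?n i - C * ?d i)"
    unfolding list_var_def sum_lessThan_telescope[of "\<lambda>i. xs ! i", symmetric]
    by (simp add: sum_subtractf sum_distrib_left right_diff_distrib)
  then have "ereal (c * list_var F xs - C * (xs ! (length xs - 1) - xs ! 0))
      = (\<Sum>i<length xs - 1. ereal (c * ?n i - C * ?d i))"
    by (simp add: sum_ereal)
  also have "\<dots> \<le> list_rate M X F xs"
    unfolding list_rate_def
    by (intro sum_mono seg_rate_ge_linear[OF assms(1)])
       (use assms(2) in \<open>auto simp: sorted_wrt_iff_nth_less\<close>)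
  finally show ?thesis .
qed

lemma Var_le_if_ID_le:
  assumes "\<And>v. ereal (c * norm v - C) \<le> Irate M X v" "c > 0" "ID M X h \<le> ereal A"
  shows "Var h \<le> ereal ((A + C) / c)"
  unfolding Var_def
proof (rule SUP_least)
  fix T assume T: "T \<in> fin_parts"
  have "ereal (c * var_sum h T - C * 1) \<le> rate_sum M X h T"
    unfolding var_sum_eq_list_var rate_sum_eq_list_rate
    using list_rate_ge_linear[OF assms(1), of "ppts T" "pval h"]
      ppts_nth_0[OF T] ppts_nth_last[OF T] sorted_ppts[OF T] distinct_ppts[OF T]
    by (simp add: strict_sorted_iff)
  also have "\<dots> \<le> ID M X h" unfolding ID_def using T by (rule SUP_upper)
  also have "\<dots> \<le> A" by fact
  finally show "ereal (var_sum h T) \<le> ereal ((A + C) / c)"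
    using assms(2) by (simp add: field_simps)
qed

lemma seg_rate_eq_SUP:
  assumes "\<tau> > 0"
  shows "seg_rate M X \<tau> x = (SUP u. ereal \<tau> * (ereal (u \<bullet> (x /\<^sub>R \<tau>)) - Kcum M X u))"
  unfolding seg_rate_def Irate_def using assms by (intro Sup_ereal_mult_left') auto

lemma seg_rate_ge:
  assumes "\<tau> > 0" "Kcum M X u = ereal k"
  shows "ereal (u \<bullet> x - \<tau> * k) \<le> seg_rate M X \<tau> x"
proof -
  have "ereal \<tau> * (ereal (u \<bullet> (x /\<^sub>R \<tau>)) - Kcum M X u) \<le> seg_rate M X \<tau> x"
    unfolding seg_rate_eq_SUP[OF assms(1)] by (rule SUP_upper) simp
  moreover have "ereal \<tau> * (ereal (u \<bullet> (x /\<^sub>R \<tau>)) - Kcum M X u) = ereal (u \<bullet> x - \<tau> * k)"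
    using assms by (simp add: field_simps inner_scaleR_right)
  ultimately show ?thesis by simp
qed

text \<open>As a supremum of the affine functions \<open>(\<tau>, x) \<mapsto> u \<bullet> x - \<tau> K(u)\<close>,
  \<open>\<tau> I(x/\<tau>)\<close> is lower semicontinuous on \<open>\<tau> > 0\<close>.\<close>

lemma seg_rate_lsc:
  assumes "t \<longlonglongrightarrow> \<tau>" "\<tau> > 0" "x \<longlonglongrightarrow> y"
  shows "seg_rate M X \<tau> y \<le> liminf (\<lambda>k. seg_rate M X (t k) (x k))"
  unfolding seg_rate_eq_SUP[OF assms(2)]
proof (rule SUP_least)
  fix u
  show "ereal \<tau> * (ereal (u \<bullet> (y /\<^sub>R \<tau>)) - Kcum M X u) \<le> liminf (\<lambda>k. seg_rate M X (t k) (x k))"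
  proof (cases "Kcum M X u = \<infinity>")
    case False
    then obtain k where k: "Kcum M X u = ereal k" by (auto simp: Kcum_def split: if_splits)
    have e: "ereal \<tau> * (ereal (u \<bullet> (y /\<^sub>R \<tau>)) - Kcum M X u) = ereal (u \<bullet> y - \<tau> * k)"
      using assms(2) k by (simp add: field_simps inner_scaleR_right)
    have "(\<lambda>n. ereal (u \<bullet> x n - t n * k)) \<longlonglongrightarrow> ereal (u \<bullet> y - \<tau> * k)"
      by (intro tendsto_intros assms)
    then have "ereal (u \<bullet> y - \<tau> * k) = liminf (\<lambda>n. ereal (u \<bullet> x n - t n * k))"
      by (intro lim_imp_Liminf[symmetric]) auto
    also have "\<dots> \<le> liminf (\<lambda>n. seg_rate M X (t n) (x n))"
      using order_tendstoD(1)[OF assms(1,2)]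
      by (intro Liminf_mono) (auto elim!: eventually_mono intro: seg_rate_ge k)
    finally show ?thesis unfolding e .
  qed (use assms(2) in simp)
qed

lemma Liminf_sum_ge:
  fixes f :: "'i \<Rightarrow> nat \<Rightarrow> ereal"
  assumes "finite I" "\<And>i k. i \<in> I \<Longrightarrow> 0 \<le> f i k"
  shows "(\<Sum>i\<in>I. liminf (f i)) \<le> liminf (\<lambda>k. \<Sum>i\<in>I. f i k)"
  using assms
proof (induction I rule: finite_induct)
  case (insert j I)
  have "(\<Sum>i\<in>insert j I. liminf (f i)) \<le> liminf (f j) + liminf (\<lambda>k. \<Sum>i\<in>I. f i k)"
    using insert by (simp add: add_left_mono)
  also have "\<dots> \<le> liminf (\<lambda>k. f j k + (\<Sum>i\<in>I. f i k))"
    using insert by (intro Liminf_add_le) (auto intro!: sum_nonneg always_eventually)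
  finally show ?case using insert by simp
qed (simp add: Liminf_const)

lemma Liminf_le_of_tendsto_bound:
  fixes a :: "nat \<Rightarrow> ereal"
  assumes "\<And>k. a k \<le> ereal (L + e k)" "e \<longlonglongrightarrow> 0"
  shows "liminf a \<le> ereal L"
proof -
  have "liminf a \<le> liminf (\<lambda>k. ereal (L + e k))" by (intro Liminf_mono) (use assms in auto)
  also have "\<dots> = ereal L"
    by (intro lim_imp_Liminf) (use assms(2) in \<open>auto intro!: tendsto_intros tendsto_eq_intros\<close>)
  finally show ?thesis .
qed

lemma list_rate_lsc:
  assumes "prob_space M"
    and len: "\<And>k. length (ys k) = length p"
    and pts: "\<And>i. i < length p \<Longrightarrow> (\<lambda>k. ys k ! i) \<longlonglongrightarrow> p ! i"
    and vals: "\<And>i. i < length p \<Longrightarrow> (\<lambda>k. F k (ys k ! i)) \<longlonglongrightarrow> G (p ! i)"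
    and "sorted_wrt (<) p" "\<And>k. sorted (ys k)"
  shows "list_rate M X G p \<le> liminf (\<lambda>k. list_rate M X (F k) (ys k))"
proof -
  let ?r = "\<lambda>k i. seg_rate M X (ys k ! Suc i - ys k ! i) (F k (ys k ! Suc i) - F k (ys k ! i))"
  have "list_rate M X G p \<le> (\<Sum>i<length p - 1. liminf (\<lambda>k. ?r k i))"
    unfolding list_rate_def
    by (intro sum_mono seg_rate_lsc tendsto_intros pts vals)
       (use assms(5) in \<open>auto simp: sorted_wrt_iff_nth_less\<close>)
  also have "\<dots> \<le> liminf (\<lambda>k. \<Sum>i<length p - 1. ?r k i)"
    by (intro Liminf_sum_ge seg_rate_nonneg assms(1))
       (use assms(6) len in \<open>auto intro: sorted_nth_mono\<close>)
  also have "\<dots> = liminf (\<lambda>k. list_rate M X (F k) (ys k))"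
    unfolding list_rate_def len ..
  finally show ?thesis .
qed

lemma tendsto_exists_if_Cauchy_within:
  fixes F :: "'a::metric_space \<Rightarrow> 'b::complete_space"
  assumes "at t within A \<noteq> bot"
    and "\<And>e. e > 0 \<Longrightarrow> \<exists>d>0. \<forall>x\<in>A. \<forall>y\<in>A. dist x t < d \<longrightarrow> dist y t < d \<longrightarrow> dist (F x) (F y) < e"
  shows "\<exists>l. (F \<longlongrightarrow> l) (at t within A)"
proof -
  have "cauchy_filter (filtermap F (at t within A))"
    unfolding cauchy_filter_metric_filtermap
  proof (intro allI impI)
    fix e :: real assume "e > 0"
    then obtain d where "d > 0"
      and d: "\<forall>x\<in>A. \<forall>y\<in>A. dist x t < d \<longrightarrow> dist y t < d \<longrightarrow> dist (F x) (F y) < e"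
      using assms(2) by blast
    then show "\<exists>P. eventually P (at t within A) \<and> (\<forall>x y. P x \<and> P y \<longrightarrow> dist (F x) (F y) < e)"
      by (intro exI[of _ "\<lambda>x. x \<in> A \<and> dist x t < d"]) (auto simp: eventually_at)
  qed
  moreover have "filtermap F (at t within A) \<noteq> bot"
    using assms(1) by (simp add: filtermap_bot_iff)
  ultimately obtain l where "filtermap F (at t within A) \<le> nhds l"
    using cauchy_filter_complete_converges[OF _ complete_UNIV] by auto
  then show ?thesis unfolding filterlim_def by blast
qed

text \<open>Otherwise one could place arbitrarily many disjoint pairs with jumps \<open>> \<epsilon>\<close> to the right
  of \<open>t\<close>, and the variation would be unbounded.\<close>

lemma bounded_var_on_right_osc:
  assumes "bounded_var_on F S V" "\<epsilon> > 0"
  obtains \<delta> where "\<delta> > 0"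
    "\<And>q q'. q \<in> S \<Longrightarrow> q' \<in> S \<Longrightarrow> q \<in> {t<..<t + \<delta>} \<Longrightarrow> q' \<in> {t<..<t + \<delta>} \<Longrightarrow>
       norm (F q - F q') \<le> \<epsilon>"
proof -
  have "\<exists>\<delta>>0. \<forall>q\<in>S. \<forall>q'\<in>S. q \<in> {t<..<t + \<delta>} \<longrightarrow> q' \<in> {t<..<t + \<delta>} \<longrightarrow>
          norm (F q - F q') \<le> \<epsilon>"
  proof (rule ccontr)
    assume "\<not> ?thesis"
    then have bad: "\<exists>a\<in>S. \<exists>b\<in>S. t < a \<and> a \<le> b \<and> b < t + \<delta> \<and> \<epsilon> < norm (F b - F a)"
      if "\<delta> > 0" for \<delta>
      using that by (metis greaterThanLessThan_iff linorder_le_cases not_le norm_minus_commute)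
    have "\<exists>xs. sorted xs \<and> set xs \<subseteq> S \<inter> {t<..<t + \<delta>} \<and> real n * \<epsilon> \<le> list_var F xs"
      if "\<delta> > 0" for n \<delta>
      using that
    proof (induction n arbitrary: \<delta>)
      case (Suc n)
      obtain a b where ab: "a \<in> S" "b \<in> S" "t < a" "a \<le> b" "b < t + \<delta>" "\<epsilon> < norm (F b - F a)"
        using bad[OF Suc.prems] by blast
      obtain xs where xs: "sorted xs" "set xs \<subseteq> S \<inter> {t<..<a}" "real n * \<epsilon> \<le> list_var F xs"
        using Suc.IH[of "a - t"] ab(3) by auto
      have "sorted (xs @ [a, b])" "set (xs @ [a, b]) \<subseteq> S \<inter> {t<..<t + \<delta>}"
        using xs(1,2) ab by (auto simp: sorted_append)
      moreover have "real (Suc n) * \<epsilon> \<le> list_var F (xs @ [a, b])"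
        using list_var_append_pair_ge[of F xs b a] xs(3) ab(6) by (simp add: algebra_simps)
      ultimately show ?case by blast
    qed (auto intro: exI[of _ "[]"])
    moreover obtain n :: nat where "V / \<epsilon> < n" using reals_Archimedean2 by blast
    ultimately obtain xs where "sorted xs" "set xs \<subseteq> S" "V < list_var F xs"
      using assms(2) by (smt (verit, best) Int_subset_iff pos_divide_less_eq zero_less_one)
    then show False using assms(1) by (auto simp: bounded_var_on_def)
  qed
  then show thesis using that by blast
qed

lemma bounded_var_on_left_osc:
  assumes "bounded_var_on F S V" "\<epsilon> > 0"
  obtains \<delta> where "\<delta> > 0"
    "\<And>q q'. q \<in> S \<Longrightarrow> q' \<in> S \<Longrightarrow> q \<in> {t - \<delta><..<t} \<Longrightarrow> q' \<in> {t - \<delta><..<t} \<Longrightarrow>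
       norm (F q - F q') \<le> \<epsilon>"
proof -
  obtain \<delta> where "\<delta> > 0" and \<delta>: "\<And>q q'. q \<in> uminus ` S \<Longrightarrow> q' \<in> uminus ` S \<Longrightarrow>
      q \<in> {- t<..<- t + \<delta>} \<Longrightarrow> q' \<in> {- t<..<- t + \<delta>} \<Longrightarrow> norm (F (- q) - F (- q')) \<le> \<epsilon>"
    using bounded_var_on_right_osc[OF bounded_var_on_reflect[OF assms(1)] assms(2)] by blast
  show thesis
  proof (rule that[OF \<open>\<delta> > 0\<close>])
    fix q q' assume "q \<in> S" "q' \<in> S" "q \<in> {t - \<delta><..<t}" "q' \<in> {t - \<delta><..<t}"
    then show "norm (F q - F q') \<le> \<epsilon>" using \<delta>[of "- q" "- q'"] by auto
  qed
qed

lemma bounded_var_on_right_limit: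
  fixes F :: "real \<Rightarrow> 'a::banach"
  assumes "bounded_var_on F S V" "at t within (S \<inter> {t<..}) \<noteq> bot"
  shows "\<exists>l. (F \<longlongrightarrow> l) (at t within (S \<inter> {t<..}))"
proof (rule tendsto_exists_if_Cauchy_within[OF assms(2)])
  fix e :: real assume "e > 0"
  then obtain \<delta> where "\<delta> > 0" and \<delta>: "\<And>q q'. q \<in> S \<Longrightarrow> q' \<in> S \<Longrightarrow> q \<in> {t<..<t + \<delta>} \<Longrightarrow>
      q' \<in> {t<..<t + \<delta>} \<Longrightarrow> norm (F q - F q') \<le> e / 2"
    using bounded_var_on_right_osc[OF assms(1), of "e / 2"] by auto
  then show "\<exists>d>0. \<forall>x\<in>S \<inter> {t<..}. \<forall>y\<in>S \<inter> {t<..}. dist x t < d \<longrightarrow> dist y t < d \<longrightarrow>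
      dist (F x) (F y) < e"
    using \<open>e > 0\<close> by (intro exI[of _ \<delta>]) (force simp: dist_norm dest: \<delta>)
qed

lemma bounded_var_on_left_limit:
  fixes F :: "real \<Rightarrow> 'a::banach"
  assumes "bounded_var_on F S V" "at t within (S \<inter> {..<t}) \<noteq> bot"
  shows "\<exists>l. (F \<longlongrightarrow> l) (at t within (S \<inter> {..<t}))"
proof (rule tendsto_exists_if_Cauchy_within[OF assms(2)])
  fix e :: real assume "e > 0"
  then obtain \<delta> where "\<delta> > 0" and \<delta>: "\<And>q q'. q \<in> S \<Longrightarrow> q' \<in> S \<Longrightarrow> q \<in> {t - \<delta><..<t} \<Longrightarrow>
      q' \<in> {t - \<delta><..<t} \<Longrightarrow> norm (F q - F q') \<le> e / 2"
    using bounded_var_on_left_osc[OF assms(1), of "e / 2"] by auto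
  then show "\<exists>d>0. \<forall>x\<in>S \<inter> {..<t}. \<forall>y\<in>S \<inter> {..<t}. dist x t < d \<longrightarrow> dist y t < d \<longrightarrow>
      dist (F x) (F y) < e"
    using \<open>e > 0\<close> by (intro exI[of _ \<delta>]) (force simp: dist_norm dest: \<delta>)
qed

section \<open>Parametrizations of completed graphs\<close>

lemma segment_norm_le:
  fixes a b c :: "'a::euclidean_space"
  assumes "x \<in> closed_segment a b" "norm (a - c) \<le> e" "norm (b - c) \<le> e"
  shows "norm (x - c) \<le> e"
proof -
  have "closed_segment a b \<subseteq> cball c e"
    by (rule closed_segment_subset) (use assms in \<open>auto simp: dist_norm norm_minus_commute\<close>)
  then show ?thesis using assms(1) by (auto simp: dist_norm norm_minus_commute)
qed

lemma cadlag01_left_limit: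
  assumes "h \<in> cadlag01" "0 < t" "t \<le> 1"
  shows "(h \<longlongrightarrow> lft h t) (at_left t)"
proof -
  have "\<exists>l. (h \<longlongrightarrow> l) (at_left t)" using assms by (simp add: cadlag01_def)
  then obtain l where l: "(h \<longlongrightarrow> l) (at_left t)" ..
  then have "lft h t = l" using assms(2) unfolding lft_def by (simp add: tendsto_Lim)
  then show ?thesis using l by simp
qed

lemma lft_norm_le:
  assumes "h \<in> cadlag01" "0 < t" "t \<le> 1" "\<eta> > 0"
    and "\<And>u. t - \<eta> < u \<Longrightarrow> u < t \<Longrightarrow> norm (h u - c) \<le> e"
  shows "norm (lft h t - c) \<le> e"
proof -
  have "lft h t \<in> cball c e"
  proof (rule Lim_in_closed_set[OF closed_cball _ _ cadlag01_left_limit[OF assms(1-3)]])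
    show "\<forall>\<^sub>F x in at_left t. h x \<in> cball c e"
      by (rule eventually_mono[OF eventually_at_left_real[of "t - \<eta>" t]])
         (use assms in \<open>auto simp: dist_norm norm_minus_commute\<close>)
  qed simp
  then show ?thesis by (simp add: dist_norm norm_minus_commute)
qed

lemma cadlag01_segments_near_lft:
  assumes "h \<in> cadlag01" "0 < t" "t \<le> 1" "e > 0"
  obtains \<eta> where "\<eta> > 0"
    "\<And>s x. t - \<eta> < s \<Longrightarrow> s < t \<Longrightarrow> 0 < s \<Longrightarrow> x \<in> closed_segment (lft h s) (h s) \<Longrightarrow>
       norm (x - lft h t) \<le> e"
proof -
  have "\<forall>\<^sub>F u in at_left t. dist (h u) (lft h t) < e"
    using cadlag01_left_limit[OF assms(1-3)] assms(4) by (rule tendstoD)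
  then obtain b where b: "b < t" "\<And>u. b < u \<Longrightarrow> u < t \<Longrightarrow> dist (h u) (lft h t) < e"
    unfolding eventually_at_left_field by blast
  show thesis
  proof (rule that[of "t - b"])
    fix s x assume s: "t - (t - b) < s" "s < t" "0 < s" and x: "x \<in> closed_segment (lft h s) (h s)"
    have near: "norm (h u - lft h t) \<le> e" if "b < u" "u < t" for u
      using b(2)[OF that] by (simp add: dist_norm)
    have "norm (lft h s - lft h t) \<le> e"
      using s assms(3) near by (intro lft_norm_le[OF assms(1), of s "s - b"]) auto
    moreover have "norm (h s - lft h t) \<le> e" using near s by simp
    ultimately show "norm (x - lft h t) \<le> e" by (rule segment_norm_le[OF x])
  qed (use b in simp)
qed

lemma continuous_injective_segment_end:
  fixes f :: "real \<Rightarrow> 'a::euclidean_space"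
  assumes "t\<^sub>0 \<le> t\<^sub>1" and cont: "continuous_on {t\<^sub>0..t\<^sub>1} f" and inj: "inj_on f {t\<^sub>0..t\<^sub>1}"
    and seg: "f ` {t\<^sub>0..t\<^sub>1} \<subseteq> closed_segment a b" and start: "f t\<^sub>0 = a"
    and hit: "b \<in> f ` {t\<^sub>0..t\<^sub>1}"
  shows "f t\<^sub>1 = b"
proof (cases "a = b")
  case True
  moreover have "f t\<^sub>1 \<in> f ` {t\<^sub>0..t\<^sub>1}" using assms(1) by simp
  ultimately show ?thesis using seg by auto
next
  case False
  define d where "d = b - a"
  define \<mu> where "\<mu> x = ((x - a) \<bullet> d) / (d \<bullet> d)" for x
  have coord: "x = a + \<mu> x *\<^sub>R d" "\<mu> x \<in> {0..1}" if x: "x \<in> closed_segment a b" for x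
  proof -
    obtain u where u: "0 \<le> u" "u \<le> 1" "x = (1 - u) *\<^sub>R a + u *\<^sub>R b"
      using x by (auto simp: closed_segment_def)
    then have x: "x = a + u *\<^sub>R d" by (simp add: d_def algebra_simps)
    then have "\<mu> x = u" using False by (simp add: \<mu>_def d_def)
    then show "x = a + \<mu> x *\<^sub>R d" "\<mu> x \<in> {0..1}" using x u by simp_all
  qed
  have f_coord: "f t = a + \<mu> (f t) *\<^sub>R d" "\<mu> (f t) \<in> {0..1}" if "t \<in> {t\<^sub>0..t\<^sub>1}" for t
    using coord[of "f t"] subsetD[OF seg imageI[OF that]] by auto
  have "continuous_on {t\<^sub>0..t\<^sub>1} (\<lambda>t. \<mu> (f t))"
    unfolding \<mu>_def using False by (intro continuous_intros cont) (simp add: d_def)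
  moreover have "inj_on (\<lambda>t. \<mu> (f t)) {t\<^sub>0..t\<^sub>1}"
  proof (rule inj_onI)
    fix t t' assume t: "t \<in> {t\<^sub>0..t\<^sub>1}" "t' \<in> {t\<^sub>0..t\<^sub>1}" and "\<mu> (f t) = \<mu> (f t')"
    then have "f t = f t'" using f_coord(1)[OF t(1)] f_coord(1)[OF t(2)] by simp
    then show "t = t'" using inj_onD[OF inj _ t] by simp
  qed
  moreover have "closed_segment t\<^sub>0 t\<^sub>1 = {t\<^sub>0..t\<^sub>1}"
    using assms(1) by (simp add: closed_segment_eq_real_ivl)
  ultimately have img: "(\<lambda>t. \<mu> (f t)) ` {t\<^sub>0..t\<^sub>1} = closed_segment (\<mu> (f t\<^sub>0)) (\<mu> (f t\<^sub>1))"
    using continuous_injective_image_segment_1[of t\<^sub>0 t\<^sub>1 "\<lambda>t. \<mu> (f t)"] by simp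
  have "\<mu> b = 1" "\<mu> (f t\<^sub>0) = 0" using False start by (simp_all add: \<mu>_def d_def)
  moreover obtain t where "t \<in> {t\<^sub>0..t\<^sub>1}" "b = f t" using hit by blast
  ultimately have "1 \<in> closed_segment 0 (\<mu> (f t\<^sub>1))" using img by (metis image_eqI)
  moreover have "\<mu> (f t\<^sub>1) \<in> {0..1}" using f_coord(2) assms(1) by simp
  ultimately have "\<mu> (f t\<^sub>1) = 1" by (simp add: closed_segment_eq_real_ivl)
  then show ?thesis using f_coord(1)[of t\<^sub>1] assms(1) by (simp add: d_def)
qed

text \<open>A parametrization \<open>\<gamma> \<in> \<Pi>'(h)\<close> is a homeomorphism from \<open>[0, 1]\<close> onto the completed graph
  \<open>\<Gamma>'(h)\<close> starting at \<open>(0, 0)\<close>. Its time component is monotone, because its fibres are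
  connected (they are homeomorphic to segments); hence it must run through \<open>\<Gamma>'(h)\<close> in the
  natural order and end at \<open>(1, h 1)\<close>.\<close>

locale graph_param =
  fixes h :: "real \<Rightarrow> 'a::euclidean_space" and \<gamma> :: "real \<Rightarrow> real \<times> 'a"
  assumes cadlag: "h \<in> cadlag01" and param: "\<gamma> \<in> Pi' h"
begin

lemma continuous_on: "continuous_on {0..1} \<gamma>"
  and bij: "bij_betw \<gamma> {0..1} (Gamma' h)" and start: "\<gamma> 0 = (0, 0)"
  using param by (auto simp: Pi'_def)

lemma continuous_on_fst: "continuous_on {0..1} (\<lambda>\<tau>. fst (\<gamma> \<tau>))"
  by (intro continuous_intros continuous_on)

lemma in_Gamma': "\<tau> \<in> {0..1} \<Longrightarrow> \<gamma> \<tau> \<in> Gamma' h"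
  using bij by (auto simp: bij_betw_def)

lemma fst_in: "\<tau> \<in> {0..1} \<Longrightarrow> fst (\<gamma> \<tau>) \<in> {0..1}"
  by (drule in_Gamma') (auto simp: Gamma'_def split: prod.splits)

lemma snd_in_segment:
  "\<tau> \<in> {0..1} \<Longrightarrow> snd (\<gamma> \<tau>) \<in> closed_segment (lft h (fst (\<gamma> \<tau>))) (h (fst (\<gamma> \<tau>)))"
  by (drule in_Gamma') (auto simp: Gamma'_def split: prod.splits)

lemma hits: "p \<in> Gamma' h \<Longrightarrow> \<exists>\<tau>\<in>{0..1}. \<gamma> \<tau> = p"
  using bij unfolding bij_betw_def by (force simp: image_iff)

lemma connected_fibre:
  assumes t: "t \<in> {0..1}"
  shows "connected {\<tau> \<in> {0..1}. fst (\<gamma> \<tau>) = t}"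
proof -
  obtain \<gamma>' where hom: "homeomorphism {0..1} (Gamma' h) \<gamma> \<gamma>'"
    using homeomorphism_compact[OF compact_Icc continuous_on] bij by (auto simp: bij_betw_def)
  let ?S = "(\<lambda>x. (t, x)) ` closed_segment (lft h t) (h t)"
  have S: "?S \<subseteq> Gamma' h" using t by (auto simp: Gamma'_def)
  have "connected (\<gamma>' ` ?S)"
    using hom S by (intro connected_continuous_image connected_segment continuous_intros)
      (auto simp: homeomorphism_def intro: continuous_on_subset)
  moreover have "\<gamma>' ` ?S = {\<tau> \<in> {0..1}. fst (\<gamma> \<tau>) = t}"
  proof (intro equalityI subsetI)
    fix \<tau> assume "\<tau> \<in> \<gamma>' ` ?S"
    then show "\<tau> \<in> {\<tau> \<in> {0..1}. fst (\<gamma> \<tau>) = t}"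
      using hom S by (force simp: homeomorphism_def)
  next
    fix \<tau> assume \<tau>: "\<tau> \<in> {\<tau> \<in> {0..1}. fst (\<gamma> \<tau>) = t}"
    then have "\<gamma> \<tau> \<in> ?S" using snd_in_segment[of \<tau>] by (auto intro: image_eqI[of _ _ "snd (\<gamma> \<tau>)"])
    then show "\<tau> \<in> \<gamma>' ` ?S" using hom \<tau> by (force simp: homeomorphism_def)
  qed
  ultimately show ?thesis by simp
qed

lemma fst_mono:
  assumes "0 \<le> a" "a \<le> b" "b \<le> 1"
  shows "fst (\<gamma> a) \<le> fst (\<gamma> b)"
proof (rule ccontr)
  let ?\<pi> = "\<lambda>\<tau>. fst (\<gamma> \<tau>)"
  assume "\<not> ?\<pi> a \<le> ?\<pi> b"
  define v where "v = (?\<pi> a + ?\<pi> b) / 2"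
  have v: "?\<pi> b < v" "v < ?\<pi> a" using \<open>\<not> ?\<pi> a \<le> ?\<pi> b\<close> by (auto simp: v_def)
  have \<pi>b: "0 \<le> ?\<pi> b" using fst_in[of b] assms by auto
  have cont: "continuous_on {x..y} ?\<pi>" if "0 \<le> x" "y \<le> 1" for x y
    by (rule continuous_on_subset[OF continuous_on_fst]) (use that in auto)
  obtain c where c: "0 \<le> c" "c \<le> a" "?\<pi> c = v"
    using IVT'[of ?\<pi> 0 v a] start v \<pi>b assms cont[of 0 a] by auto
  obtain c' where c': "a \<le> c'" "c' \<le> b" "?\<pi> c' = v"
    using IVT2'[of ?\<pi> b v a] v assms cont[of a b] by auto
  have "v \<in> {0..1}" using fst_in[of a] v \<pi>b assms by auto
  from connected_fibre[OF this] have "a \<in> {\<tau> \<in> {0..1}. ?\<pi> \<tau> = v}"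
    by (rule connectedD_interval) (use c c' assms in auto)
  then show False using v by simp
qed

lemma fst_1: "fst (\<gamma> 1) = 1"
proof -
  obtain \<tau> where "\<tau> \<in> {0..1}" "\<gamma> \<tau> = (1, h 1)"
    using hits[of "(1, h 1)"] by (auto simp: Gamma'_def)
  then show ?thesis using fst_mono[of \<tau> 1] fst_in[of 1] by auto
qed

lemma fibre_1:
  obtains \<tau>\<^sub>1 where "\<tau>\<^sub>1 \<in> {0<..1}" "{\<tau> \<in> {0..1}. fst (\<gamma> \<tau>) = 1} = {\<tau>\<^sub>1..1}"
proof -
  define F where "F = {\<tau> \<in> {0..1}. fst (\<gamma> \<tau>) = 1}"
  define \<tau>\<^sub>1 where "\<tau>\<^sub>1 = Inf F"
  have "closed F" unfolding F_def
    by (rule continuous_closed_preimage_constant[OF continuous_on_fst]) simp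
  moreover have "1 \<in> F" "bdd_below F"
    using fst_1 by (auto simp: F_def intro: bdd_belowI[of _ 0])
  ultimately have \<tau>\<^sub>1F: "\<tau>\<^sub>1 \<in> F"
    unfolding \<tau>\<^sub>1_def by (intro closed_contains_Inf) auto
  have \<tau>\<^sub>1_le: "\<tau>\<^sub>1 \<le> \<tau>" if "\<tau> \<in> F" for \<tau>
    unfolding \<tau>\<^sub>1_def by (rule cInf_lower[OF that \<open>bdd_below F\<close>])
  have "\<tau>\<^sub>1 \<noteq> 0" using \<tau>\<^sub>1F start by (auto simp: F_def)
  then have "\<tau>\<^sub>1 \<in> {0<..1}" using \<tau>\<^sub>1F by (simp add: F_def)
  moreover have "F = {\<tau>\<^sub>1..1}"
  proof (intro equalityI subsetI)
    fix \<tau> assume "\<tau> \<in> {\<tau>\<^sub>1..1}"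
    then show "\<tau> \<in> F"
      using connectedD_interval[OF connected_fibre[of 1], folded F_def, OF _ \<tau>\<^sub>1F \<open>1 \<in> F\<close>] by simp
  qed (use \<tau>\<^sub>1_le in \<open>auto simp: F_def\<close>)
  ultimately show thesis using that unfolding F_def by blast
qed

text \<open>At the left end of the fibre over time \<open>1\<close>, \<open>\<gamma>\<close> arrives from the segments over times
  \<open>t < 1\<close>, which accumulate at \<open>h(1-)\<close>.\<close>

lemma snd_fibre_1_start:
  assumes \<tau>\<^sub>1: "\<tau>\<^sub>1 \<in> {0<..1}" and F: "{\<tau> \<in> {0..1}. fst (\<gamma> \<tau>) = 1} = {\<tau>\<^sub>1..1}"
  shows "snd (\<gamma> \<tau>\<^sub>1) = lft h 1"
proof -
  have "\<tau>\<^sub>1 \<in> {\<tau> \<in> {0..1}. fst (\<gamma> \<tau>) = 1}" unfolding F using \<tau>\<^sub>1 by simp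
  then have \<pi>\<tau>\<^sub>1: "fst (\<gamma> \<tau>\<^sub>1) = 1" by simp
  have lim: "(f \<longlongrightarrow> f \<tau>\<^sub>1) (at \<tau>\<^sub>1 within {0..<\<tau>\<^sub>1})"
    if "continuous_on {0..1} f" for f :: "real \<Rightarrow> 'b::topological_space"
  proof -
    have "(f \<longlongrightarrow> f \<tau>\<^sub>1) (at \<tau>\<^sub>1 within {0..1})"
      using that \<tau>\<^sub>1 unfolding continuous_on_def by simp
    then show ?thesis by (rule tendsto_within_subset) (use \<tau>\<^sub>1 in auto)
  qed
  have "norm (snd (\<gamma> \<tau>\<^sub>1) - lft h 1) \<le> e" if "e > 0" for e
  proof -
    obtain \<eta> where "\<eta> > 0" and \<eta>: "\<And>s x. 1 - \<eta> < s \<Longrightarrow> s < 1 \<Longrightarrow> 0 < s \<Longrightarrow>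
        x \<in> closed_segment (lft h s) (h s) \<Longrightarrow> norm (x - lft h 1) \<le> e"
      using cadlag01_segments_near_lft[OF cadlag _ _ \<open>e > 0\<close>, of 1] by auto
    have "snd (\<gamma> \<tau>\<^sub>1) \<in> cball (lft h 1) e"
    proof (rule Lim_in_closed_set[OF closed_cball _ _ lim])
      have "\<forall>\<^sub>F \<tau> in at \<tau>\<^sub>1 within {0..<\<tau>\<^sub>1}. max (1 - \<eta>) 0 < fst (\<gamma> \<tau>)"
        using lim[OF continuous_on_fst] \<open>\<eta> > 0\<close> unfolding \<pi>\<tau>\<^sub>1 by (intro order_tendstoD(1)) auto
      moreover have "\<forall>\<^sub>F \<tau> in at \<tau>\<^sub>1 within {0..<\<tau>\<^sub>1}. \<tau> \<in> {0..<\<tau>\<^sub>1}"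
        by (simp add: eventually_at_filter)
      ultimately show "\<forall>\<^sub>F \<tau> in at \<tau>\<^sub>1 within {0..<\<tau>\<^sub>1}. snd (\<gamma> \<tau>) \<in> cball (lft h 1) e"
      proof eventually_elim
        case (elim \<tau>)
        then have \<tau>: "\<tau> \<in> {0..1}" "\<tau> \<notin> {\<tau> \<in> {0..1}. fst (\<gamma> \<tau>) = 1}"
          using \<tau>\<^sub>1 unfolding F by auto
        then have "fst (\<gamma> \<tau>) < 1" using fst_in[of \<tau>] by (auto simp: less_le)
        then have "norm (snd (\<gamma> \<tau>) - lft h 1) \<le> e"
          using elim by (intro \<eta>[OF _ _ _ snd_in_segment[OF \<tau>(1)]]) auto
        then show ?case by (simp add: dist_norm norm_minus_commute)
      qed
      show "at \<tau>\<^sub>1 within {0..<\<tau>\<^sub>1} \<noteq> bot"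
        using \<tau>\<^sub>1 by (simp add: at_within_eq_bot_iff closure_atLeastLessThan)
    qed (rule continuous_on_snd[OF continuous_on])
    then show ?thesis by (simp add: dist_norm norm_minus_commute)
  qed
  then show ?thesis using field_le_epsilon[of "norm (snd (\<gamma> \<tau>\<^sub>1) - lft h 1)" 0] by simp
qed

text \<open>On the fibre over \<open>1\<close>, \<open>\<gamma>\<close> runs injectively through \<open>{1} \<times> [h(1-), h(1)]\<close> starting at
  \<open>h(1-)\<close>, so it must end at \<open>h(1)\<close>.\<close>

lemma endpoint: "\<gamma> 1 = (1, h 1)"
proof -
  obtain \<tau>\<^sub>1 where \<tau>\<^sub>1: "\<tau>\<^sub>1 \<in> {0<..1}" and F: "{\<tau> \<in> {0..1}. fst (\<gamma> \<tau>) = 1} = {\<tau>\<^sub>1..1}"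
    using fibre_1 by blast
  have on_fibre: "\<tau> \<in> {0..1}" "\<gamma> \<tau> = (1, snd (\<gamma> \<tau>))"
    "snd (\<gamma> \<tau>) \<in> closed_segment (lft h 1) (h 1)" if "\<tau> \<in> {\<tau>\<^sub>1..1}" for \<tau>
  proof -
    have "\<tau> \<in> {\<tau> \<in> {0..1}. fst (\<gamma> \<tau>) = 1}" unfolding F by (rule that)
    then show "\<tau> \<in> {0..1}" "\<gamma> \<tau> = (1, snd (\<gamma> \<tau>))"
      "snd (\<gamma> \<tau>) \<in> closed_segment (lft h 1) (h 1)"
      using snd_in_segment[of \<tau>] by (simp_all add: prod_eq_iff)
  qed
  have "snd (\<gamma> 1) = h 1"
  proof (rule continuous_injective_segment_end)
    show "\<tau>\<^sub>1 \<le> 1" using \<tau>\<^sub>1 by simp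
    show "continuous_on {\<tau>\<^sub>1..1} (\<lambda>\<tau>. snd (\<gamma> \<tau>))"
      using \<tau>\<^sub>1 by (intro continuous_on_snd continuous_on_subset[OF continuous_on]) auto
    show "inj_on (\<lambda>\<tau>. snd (\<gamma> \<tau>)) {\<tau>\<^sub>1..1}"
    proof (rule inj_onI)
      fix \<tau> \<tau>' assume \<tau>: "\<tau> \<in> {\<tau>\<^sub>1..1}" "\<tau>' \<in> {\<tau>\<^sub>1..1}" and "snd (\<gamma> \<tau>) = snd (\<gamma> \<tau>')"
      then have "\<gamma> \<tau> = \<gamma> \<tau>'" using on_fibre(2)[OF \<tau>(1)] on_fibre(2)[OF \<tau>(2)] by simp
      then show "\<tau> = \<tau>'"
        using inj_onD[OF bij_betw_imp_inj_on[OF bij]] on_fibre(1)[OF \<tau>(1)] on_fibre(1)[OF \<tau>(2)] by blast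
    qed
    show "(\<lambda>\<tau>. snd (\<gamma> \<tau>)) ` {\<tau>\<^sub>1..1} \<subseteq> closed_segment (lft h 1) (h 1)"
      using on_fibre(3) by auto
    show "snd (\<gamma> \<tau>\<^sub>1) = lft h 1" by (rule snd_fibre_1_start[OF \<tau>\<^sub>1 F])
    obtain \<tau> where "\<tau> \<in> {0..1}" "\<gamma> \<tau> = (1, h 1)"
      using hits[of "(1, h 1)"] by (auto simp: Gamma'_def)
    moreover from this have "\<tau> \<in> {\<tau>\<^sub>1..1}" unfolding F[symmetric] by simp
    ultimately show "h 1 \<in> (\<lambda>\<tau>. snd (\<gamma> \<tau>)) ` {\<tau>\<^sub>1..1}" by (intro image_eqI[of _ _ \<tau>]) simp_all
  qed
  then show ?thesis using on_fibre(2)[of 1] \<tau>\<^sub>1 by simp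
qed

end

lemma rho1'_lessE:
  assumes "rho1' g h < ereal \<delta>"
  obtains \<gamma>\<^sub>1 \<gamma>\<^sub>2 where "\<gamma>\<^sub>1 \<in> Pi' g" "\<gamma>\<^sub>2 \<in> Pi' h" "\<And>\<tau>. \<tau> \<in> {0..1} \<Longrightarrow> norm (\<gamma>\<^sub>1 \<tau> - \<gamma>\<^sub>2 \<tau>) < \<delta>"
proof -
  obtain p where p: "p \<in> Pi' g \<times> Pi' h" "(SUP t\<in>{0..1}. ereal (norm (fst p t - snd p t))) < ereal \<delta>"
    using assms unfolding rho1'_def by (auto simp: INF_less_iff)
  have "ereal (norm (fst p \<tau> - snd p \<tau>)) < ereal \<delta>" if "\<tau> \<in> {0..1}" for \<tau>
    using that by (intro order.strict_trans1[OF SUP_upper p(2)])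
  then show thesis using p(1) that[of "fst p" "snd p"] by auto
qed

lemma rho1'_dist_at_1:
  assumes "g \<in> cadlag01" "h \<in> cadlag01" "rho1' g h < ereal \<delta>"
  shows "norm (g 1 - h 1) < \<delta>"
proof -
  obtain \<gamma>\<^sub>1 \<gamma>\<^sub>2 where "\<gamma>\<^sub>1 \<in> Pi' g" "\<gamma>\<^sub>2 \<in> Pi' h" "norm (\<gamma>\<^sub>1 1 - \<gamma>\<^sub>2 1) < \<delta>"
    using rho1'_lessE[OF assms(3)] by (metis atLeastAtMost_iff order_refl zero_le_one)
  then show ?thesis
    using graph_param.endpoint[of g \<gamma>\<^sub>1] graph_param.endpoint[of h \<gamma>\<^sub>2] assms(1,2)
    by (simp add: graph_param_def)
qed

definition osc :: "(real \<Rightarrow> 'a::real_normed_vector) \<Rightarrow> real set \<Rightarrow> real \<Rightarrow> real \<Rightarrow> real" where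
  "osc F S a b = Sup ((\<lambda>(u, v). norm (F u - F v)) ` ((S \<inter> {a..b}) \<times> (S \<inter> {a..b})))"

lemma bdd_above_osc:
  assumes "bounded_var_on F S V"
  shows "bdd_above ((\<lambda>(u, v). norm (F u - F v)) ` ((S \<inter> {a..b}) \<times> (S \<inter> {a..b})))"
  by (rule bdd_aboveI[of _ V]) (use bounded_var_on_dist[OF assms] in auto)

lemma osc_ge:
  assumes "bounded_var_on F S V" "u \<in> S \<inter> {a..b}" "v \<in> S \<inter> {a..b}"
  shows "norm (F u - F v) \<le> osc F S a b"
  unfolding osc_def by (rule cSup_upper[OF _ bdd_above_osc[OF assms(1)]]) (use assms in force)

lemma osc_nonneg:
  assumes "bounded_var_on F S V" "a \<in> S" "a \<le> b"
  shows "0 \<le> osc F S a b"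
  using osc_ge[OF assms(1), of a a b a] assms by simp

lemma osc_approx:
  assumes "bounded_var_on F S V" "a \<in> S" "a \<le> b" "\<eta> > 0"
  obtains u v where "u \<in> S \<inter> {a..b}" "v \<in> S \<inter> {a..b}" "u \<le> v" "osc F S a b - \<eta> < norm (F v - F u)"
proof -
  let ?X = "(\<lambda>(u, v). norm (F u - F v)) ` ((S \<inter> {a..b}) \<times> (S \<inter> {a..b}))"
  have "?X \<noteq> {}" using assms by auto
  moreover have "osc F S a b - \<eta> < Sup ?X" using assms(4) by (simp add: osc_def)
  ultimately obtain u v where uv: "u \<in> S \<inter> {a..b}" "v \<in> S \<inter> {a..b}"
    "osc F S a b - \<eta> < norm (F u - F v)"
    using less_cSup_iff[OF _ bdd_above_osc[OF assms(1)]] by force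
  show thesis
  proof (cases "u \<le> v")
    case True
    then show ?thesis using uv that[of u v] by (simp add: norm_minus_commute)
  next
    case False
    then show ?thesis using uv that[of v u] by simp
  qed
qed

text \<open>Take near-optimal pairs in every cell and concatenate them into one partition.\<close>

lemma sum_osc_grid_le:
  fixes F :: "real \<Rightarrow> 'a::real_normed_vector"
  assumes BV: "bounded_var_on F S V" and N: "N > 0"
    and grid: "\<And>j. j \<le> N \<Longrightarrow> real j / real N \<in> S"
  shows "(\<Sum>j<N. osc F S (real j / real N) (real (Suc j) / real N)) \<le> V"
proof (rule field_le_epsilon)
  fix \<eta> :: real assume \<eta>: "\<eta> > 0"
  let ?a = "\<lambda>j. real j / real N"
  have "\<exists>u v. u \<in> S \<inter> {?a j..?a (Suc j)} \<and> v \<in> S \<inter> {?a j..?a (Suc j)} \<and> u \<le> v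
      \<and> osc F S (?a j) (?a (Suc j)) - \<eta> / N < norm (F v - F u)" if "j < N" for j
  proof (rule osc_approx[OF BV grid, of j "?a (Suc j)" "\<eta> / N"])
    show "j \<le> N" "?a j \<le> ?a (Suc j)" "0 < \<eta> / N"
      using that N \<eta> by (simp_all add: divide_right_mono)
  qed blast
  then obtain u v where uv: "\<And>j. j < N \<Longrightarrow> u j \<in> S \<inter> {?a j..?a (Suc j)}"
    "\<And>j. j < N \<Longrightarrow> v j \<in> S \<inter> {?a j..?a (Suc j)}" "\<And>j. j < N \<Longrightarrow> u j \<le> v j"
    "\<And>j. j < N \<Longrightarrow> osc F S (?a j) (?a (Suc j)) - \<eta> / N < norm (F (v j) - F (u j))"
    by metis
  define xs where "xs n = concat (map (\<lambda>j. [u j, v j]) [0..<n])" for n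
  have xs: "sorted (xs n) \<and> set (xs n) \<subseteq> S \<and> (\<forall>x\<in>set (xs n). x \<le> ?a n)
     \<and> (\<Sum>j<n. norm (F (v j) - F (u j))) \<le> list_var F (xs n)" if "n \<le> N" for n
    using that
  proof (induction n)
    case (Suc n)
    have xs_Suc: "xs (Suc n) = xs n @ [u n, v n]" by (simp add: xs_def)
    have "?a n \<le> ?a (Suc n)" by (simp add: divide_right_mono)
    then show ?case
      using Suc uv[of n] list_var_append_pair_ge[of F "xs n" "v n" "u n"]
      unfolding xs_Suc by (auto simp: sorted_append)
  qed (simp add: xs_def)
  have "(\<Sum>j<N. osc F S (?a j) (?a (Suc j))) \<le> (\<Sum>j<N. norm (F (v j) - F (u j)) + \<eta> / N)"
  proof (rule sum_mono)
    fix j assume "j \<in> {..<N}"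
    then show "osc F S (?a j) (?a (Suc j)) \<le> norm (F (v j) - F (u j)) + \<eta> / N"
      using uv(4)[of j] by simp
  qed
  also have "\<dots> = (\<Sum>j<N. norm (F (v j) - F (u j))) + \<eta>"
    using N by (simp add: sum.distrib)
  also have "\<dots> \<le> V + \<eta>"
    using xs[of N] BV unfolding bounded_var_on_def by fastforce
  finally show "(\<Sum>j<N. osc F S (?a j) (?a (Suc j))) \<le> V + \<eta>" .
qed

definition grid_osc :: "(real \<Rightarrow> 'a::real_normed_vector) \<Rightarrow> nat \<Rightarrow> nat \<Rightarrow> real" where
  "grid_osc F N i = (if i < N then osc F {0..1} (real i / real N) (real (Suc i) / real N) else 0)"

text \<open>Note \<open>0 - 1 = 0\<close> in \<^typ>\<open>nat\<close>: the first cell is simply counted twice.\<close>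

definition neighbour_osc :: "(real \<Rightarrow> 'a::real_normed_vector) \<Rightarrow> nat \<Rightarrow> nat \<Rightarrow> real" where
  "neighbour_osc F N j = grid_osc F N (j - 1) + grid_osc F N j + grid_osc F N (Suc j)"

lemma grid_osc_nonneg:
  assumes "bounded_var_on F {0..1} V"
  shows "0 \<le> grid_osc F N i"
proof (cases "i < N")
  case True
  then have "real i / real N \<in> {0..1}" by (simp add: field_simps)
  moreover have "real i / real N \<le> real (Suc i) / real N" by (simp add: divide_right_mono)
  ultimately show ?thesis using True osc_nonneg[OF assms] by (simp add: grid_osc_def)
qed (simp add: grid_osc_def)

lemma sum_grid_osc_le:
  assumes "bounded_var_on F {0..1} V" "N > 0"
  shows "(\<Sum>j<N. grid_osc F N j) \<le> V"
proof -
  have "real j / real N \<in> {0..1}" if "j \<le> N" for j using that assms(2) by (simp add: field_simps)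
  then show ?thesis unfolding grid_osc_def using sum_osc_grid_le[OF assms] by simp
qed

lemma neighbour_osc_nonneg: "bounded_var_on F {0..1} V \<Longrightarrow> 0 \<le> neighbour_osc F N j"
  unfolding neighbour_osc_def by (intro add_nonneg_nonneg grid_osc_nonneg)

lemma sum_neighbour_osc_le:
  assumes BV: "bounded_var_on F {0..1} V" and N: "N > 0"
  shows "(\<Sum>j<N. neighbour_osc F N j) \<le> 4 * V"
proof -
  let ?M = "grid_osc F N"
  have M: "0 \<le> ?M i" for i by (rule grid_osc_nonneg[OF BV])
  have sum_M: "(\<Sum>j<N. ?M j) \<le> V" by (rule sum_grid_osc_le[OF BV N])
  obtain N' where N': "N = Suc N'" using N by (cases N) auto
  have "(\<Sum>j<N. ?M (j - 1)) = ?M 0 + (\<Sum>i<N'. ?M i)"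
    unfolding N' by (subst sum.lessThan_Suc_shift) simp
  also have "\<dots> \<le> (\<Sum>j<N. ?M j) + (\<Sum>j<N. ?M j)"
    using M N' by (intro add_mono member_le_sum sum_mono2) auto
  finally have left: "(\<Sum>j<N. ?M (j - 1)) \<le> 2 * (\<Sum>j<N. ?M j)" by simp
  have "(\<Sum>j<N. ?M (Suc j)) + ?M 0 = (\<Sum>j<Suc N. ?M j)"
    unfolding sum.lessThan_Suc_shift by simp
  also have "\<dots> = (\<Sum>j<N. ?M j)" by (simp add: grid_osc_def)
  finally have right: "(\<Sum>j<N. ?M (Suc j)) \<le> (\<Sum>j<N. ?M j)" using M[of 0] by linarith
  show ?thesis
    using left right sum_M unfolding neighbour_osc_def by (simp add: sum.distrib)
qed

lemma norm_le_grid_osc: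
  assumes "bounded_var_on F {0..1} V" "i < N"
    and "x \<in> {real i / real N..real (Suc i) / real N}" "y \<in> {real i / real N..real (Suc i) / real N}"
  shows "norm (F x - F y) \<le> grid_osc F N i"
proof -
  have "real (Suc i) / real N \<le> 1" using assms(2) by (simp add: field_simps)
  then show ?thesis
    using assms osc_ge[OF assms(1), of x "real i / real N" "real (Suc i) / real N" y]
    by (simp add: grid_osc_def)
qed

text \<open>If \<open>s\<close> lies in the \<open>j\<close>-th cell, every point at distance \<open>< 1/N\<close> from \<open>s\<close> lies in one of
  the cells \<open>j - 1\<close>, \<open>j\<close>, \<open>j + 1\<close>.\<close>

lemma norm_le_neighbour_osc:
  assumes BV: "bounded_var_on F {0..1} V" and N: "N > 0"
    and j: "j < N" "real j / real N \<le> s" "s < real (Suc j) / real N"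
    and u: "u \<in> {0..1}" "\<bar>u - s\<bar> < 1 / real N"
  shows "norm (F u - F s) \<le> neighbour_osc F N j"
proof -
  let ?M = "grid_osc F N" and ?a = "\<lambda>i. real i / real N"
  have M: "0 \<le> ?M i" for i by (rule grid_osc_nonneg[OF BV])
  note cell = norm_le_grid_osc[OF BV]
  have s: "s \<in> {?a j..?a (Suc j)}" using j by simp
  have step: "?a (Suc i) = ?a i + 1 / real N" for i by (simp add: add_divide_distrib)
  have near: "s - 1 / real N < u" "u < s + 1 / real N" using u(2) by (simp_all add: abs_less_iff)
  consider "u \<in> {?a j..?a (Suc j)}" | "?a (Suc j) < u" | "u < ?a j"
    by (metis atLeastAtMost_iff not_le)
  then show ?thesis
  proof cases
    case 1
    then show ?thesis using cell[OF j(1) 1 s] M[of "j - 1"] M[of "Suc j"]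
      by (simp add: neighbour_osc_def)
  next
    case 2
    then have "?a (Suc j) < 1" using u(1) by simp
    then have "Suc j < N" using N by (simp add: divide_less_eq)
    moreover have "u \<le> ?a (Suc (Suc j))" using near(2) j(3) step[of "Suc j"] by linarith
    ultimately have "norm (F u - F (?a (Suc j))) \<le> ?M (Suc j)"
      using 2 by (intro cell) auto
    moreover have "norm (F (?a (Suc j)) - F s) \<le> ?M j"
      using s by (intro cell j(1)) auto
    ultimately show ?thesis
      using norm_triangle_ineq[of "F u - F (?a (Suc j))" "F (?a (Suc j)) - F s"] M[of "j - 1"]
      by (simp add: neighbour_osc_def)
  next
    case 3
    then have "j \<noteq> 0" using u(1) by (cases j) auto
    then have a: "?a (Suc (j - 1)) = ?a j" by simp
    have "?a (j - 1) \<le> u" using near(1) j(2) step[of "j - 1"] a by linarith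
    then have "norm (F u - F (?a j)) \<le> ?M (j - 1)"
      using 3 j(1) a cell[of "j - 1" N u "?a j"] by simp
    moreover have "norm (F (?a j) - F s) \<le> ?M j"
      using s by (intro cell j(1)) auto
    ultimately show ?thesis
      using norm_triangle_ineq[of "F u - F (?a j)" "F (?a j) - F s"] M[of "Suc j"]
      by (simp add: neighbour_osc_def)
  qed
qed

definition step_fun :: "nat \<Rightarrow> (nat \<Rightarrow> real) \<Rightarrow> real \<Rightarrow> real" where
  "step_fun N c s = (\<Sum>j<N. c j * indicator {real j / real N..<real (Suc j) / real N} s)"

lemma grid_cell:
  assumes "N > 0" "0 \<le> s" "s < 1"
  obtains j where "j < N" "real j / real N \<le> s" "s < real (Suc j) / real N"
proof
  define j where "j = nat \<lfloor>s * real N\<rfloor>"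
  have fl: "real j = of_int \<lfloor>s * real N\<rfloor>" using assms by (simp add: j_def)
  then have "real j \<le> s * real N" "s * real N < real j + 1" by linarith+
  then show "real j / real N \<le> s" "s < real (Suc j) / real N"
    using assms by (simp_all add: field_simps)
  have "s * real N < real N" using assms by simp
  then show "j < N" using fl by linarith
qed

lemma step_fun_eq:
  assumes "j < N" "real j / real N \<le> s" "s < real (Suc j) / real N"
  shows "step_fun N c s = c j"
proof -
  have "indicator {real i / real N..<real (Suc i) / real N} s = (if i = j then 1 else 0 :: real)"
    for i
  proof (cases i j rule: linorder_cases)
    case less
    then have "real (Suc i) / real N \<le> real j / real N" by (simp add: divide_right_mono)
    then show ?thesis using less assms by (simp add: indicator_def)
  next
    case greater
    then have "real (Suc j) / real N \<le> real i / real N" by (simp add: divide_right_mono)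
    then show ?thesis using greater assms by (simp add: indicator_def)
  qed (use assms in simp)
  then have "step_fun N c s = (\<Sum>i<N. if i = j then c i else 0)"
    unfolding step_fun_def by (intro sum.cong) auto
  then show ?thesis using assms(1) by simp
qed

lemma step_fun_nonneg: "(\<And>j. 0 \<le> c j) \<Longrightarrow> 0 \<le> step_fun N c s"
  unfolding step_fun_def by (intro sum_nonneg) auto

lemma step_fun_add_const:
  assumes "N > 0" "0 \<le> s" "s < 1"
  shows "step_fun N (\<lambda>j. c j + d) s = step_fun N c s + d"
proof -
  obtain j where "j < N" "real j / real N \<le> s" "s < real (Suc j) / real N"
    using grid_cell[OF assms] .
  then show ?thesis by (simp add: step_fun_eq)
qed

lemma
  assumes "N > 0"
  shows set_integrable_step_fun: "set_integrable lborel {0..1} (step_fun N c)"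
    and set_integral_step_fun: "(LINT s:{0..1}|lborel. step_fun N c s) = (\<Sum>j<N. c j) / real N"
proof -
  let ?I = "\<lambda>j. {real j / real N..<real (Suc j) / real N}"
  have sub: "?I j \<subseteq> {0..1}" if "j < N" for j
  proof
    fix x assume "x \<in> ?I j"
    moreover have "real (Suc j) / real N \<le> 1" using that by (simp add: field_simps)
    moreover have "0 \<le> real j / real N" by simp
    ultimately show "x \<in> {0..1}" unfolding atLeastLessThan_iff atLeastAtMost_iff by linarith
  qed
  have le: "real j / real N \<le> real (Suc j) / real N" for j by (simp add: divide_right_mono)
  have eq: "indicator {0..1} s *\<^sub>R step_fun N c s = (\<Sum>j<N. c j * indicator (?I j) s)" for s
  proof (cases "s \<in> {0..1}")
    case False
    then have "indicator (?I j) s = (0::real)" if "j < N" for j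
      using sub[OF that] by (auto simp: indicator_def)
    then show ?thesis using False by (simp add: step_fun_def)
  qed (simp add: step_fun_def)
  have int: "integrable lborel (indicator (?I j) :: real \<Rightarrow> real)" for j
    using le[of j] by (simp add: emeasure_lborel_Ico del: of_nat_Suc)
  show "set_integrable lborel {0..1} (step_fun N c)"
    unfolding set_integrable_def eq
    by (intro Bochner_Integration.integrable_sum integrable_mult_right int)
  have "(LINT s:{0..1}|lborel. step_fun N c s) = (\<Sum>j<N. c j * (1 / real N))"
    unfolding set_lebesgue_integral_def eq using int le
    by (subst Bochner_Integration.integral_sum) (auto simp: diff_divide_distrib[symmetric])
  then show "(LINT s:{0..1}|lborel. step_fun N c s) = (\<Sum>j<N. c j) / real N"
    by (simp add: sum_divide_distrib)
qed

text \<open>No integrability of \<open>f\<close> is required: a non-integrable function has Bochner integral \<open>0\<close>.\<close>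

lemma set_integral_le_if_le_01:
  fixes f g :: "real \<Rightarrow> real"
  assumes "set_integrable lborel {0..1} g"
    and "\<And>s. 0 < s \<Longrightarrow> s < 1 \<Longrightarrow> f s \<le> g s" "\<And>s. s \<in> {0..1} \<Longrightarrow> 0 \<le> g s"
  shows "(LINT s:{0..1}|lborel. f s) \<le> (LINT s:{0..1}|lborel. g s)"
  unfolding set_lebesgue_integral_def
proof (rule integral_mono_AE')
  show "integrable lborel (\<lambda>s. indicator {0..1} s *\<^sub>R g s)"
    using assms(1) by (simp add: set_integrable_def)
  have "AE s in lborel. s \<noteq> 0" "AE s in lborel. s \<noteq> 1" by (rule AE_lborel_singleton)+
  then show "AE s in lborel. indicator {0..1} s *\<^sub>R f s \<le> indicator {0..1} s *\<^sub>R g s"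
    by eventually_elim (use assms(2) in \<open>auto simp: indicator_def\<close>)
  show "AE s in lborel. 0 \<le> indicator {0..1} s *\<^sub>R g s"
    using assms(3) by (simp add: indicator_def)
qed

section \<open>Pointwise control of \<open>\<rho>'\<^sub>1\<close>-close functions\<close>

lemma rho1'_lessE_point:
  assumes "rho1' g h < ereal \<delta>" "s \<in> {0..1}"
  obtains t x where "t \<in> {0..1}" "\<bar>t - s\<bar> < \<delta>" "x \<in> closed_segment (lft h t) (h t)"
    "norm (g s - x) < \<delta>"
proof -
  obtain \<gamma>\<^sub>1 \<gamma>\<^sub>2 where \<gamma>: "\<gamma>\<^sub>1 \<in> Pi' g" "\<gamma>\<^sub>2 \<in> Pi' h"
    "\<And>\<tau>. \<tau> \<in> {0..1} \<Longrightarrow> norm (\<gamma>\<^sub>1 \<tau> - \<gamma>\<^sub>2 \<tau>) < \<delta>"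
    using rho1'_lessE[OF assms(1)] by blast
  have "(s, g s) \<in> \<gamma>\<^sub>1 ` {0..1}"
    using \<gamma>(1) assms(2) by (simp add: Pi'_def bij_betw_def Gamma'_def)
  then obtain \<tau> where \<tau>: "\<tau> \<in> {0..1}" "\<gamma>\<^sub>1 \<tau> = (s, g s)" by auto
  have "\<gamma>\<^sub>2 \<tau> \<in> Gamma' h" using \<gamma>(2) \<tau>(1) unfolding Pi'_def bij_betw_def by blast
  then obtain t x where tx: "\<gamma>\<^sub>2 \<tau> = (t, x)" "t \<in> {0..1}" "x \<in> closed_segment (lft h t) (h t)"
    by (auto simp: Gamma'_def)
  have "norm (s - t, g s - x) < \<delta>" using \<gamma>(3)[OF \<tau>(1)] \<tau>(2) tx(1) by simp
  then have "\<bar>t - s\<bar> < \<delta>" "norm (g s - x) < \<delta>"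
    using norm_fst_le[of "s - t" "g s - x"] norm_snd_le[of "g s - x" "s - t"]
    by (auto simp: abs_minus_commute)
  then show thesis using that tx(2,3) by blast
qed

lemma cadlag01_segment_norm_le:
  assumes h: "h \<in> cadlag01" and t: "t \<in> {0..1}" and "\<eta> > 0"
    and near: "\<And>u. u \<in> {0..1} \<Longrightarrow> \<bar>u - t\<bar> < \<eta> \<Longrightarrow> norm (pval h u - c) \<le> R"
    and x: "x \<in> closed_segment (lft h t) (h t)"
  shows "norm (x - c) \<le> R"
proof (rule segment_norm_le[OF x])
  show "norm (h t - c) \<le> R"
  proof (cases "t = 0")
    case True
    have "h 0 \<in> cball c R"
    proof (rule Lim_in_closed_set[OF closed_cball _ _ ])
      show "(h \<longlongrightarrow> h 0) (at_right 0)" using h by (simp add: cadlag01_def continuous_within)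
      have "\<forall>\<^sub>F u in at_right 0. u \<in> {0<..<min 1 \<eta>}"
        using \<open>\<eta> > 0\<close> by (intro eventually_at_right_real) simp
      then show "\<forall>\<^sub>F u in at_right 0. h u \<in> cball c R"
      proof eventually_elim
        case (elim u)
        then show ?case using near[of u] True by (simp add: pval_def dist_norm norm_minus_commute)
      qed
    qed simp
    then show ?thesis using True by (simp add: dist_norm norm_minus_commute)
  next
    case False
    then show ?thesis using near[OF t] \<open>\<eta> > 0\<close> by (simp add: pval_def)
  qed
  show "norm (lft h t - c) \<le> R"
  proof (cases "t = 0")
    case True
    then show ?thesis using near[OF t] \<open>\<eta> > 0\<close> by (simp add: pval_def lft_def)
  next
    case False
    then have "0 < t" using t by simp
    have "norm (h u - c) \<le> R" if "t - min t \<eta> < u" "u < t" for u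
    proof -
      have "0 < u" "\<bar>u - t\<bar> < \<eta>" using that by (auto simp: min_def split: if_splits)
      then show ?thesis using near[of u] that t by (simp add: pval_def)
    qed
    then show ?thesis
      using \<open>0 < t\<close> \<open>\<eta> > 0\<close> t by (intro lft_norm_le[OF h, of t "min t \<eta>"]) auto
  qed
qed

text \<open>\<open>g(s)\<close> is \<open>\<delta>\<close>-close to a point of the completed graph of \<open>h\<close> over some \<open>t\<close> with
  \<open>|t - s| < \<delta>\<close>; on a grid of mesh \<open>\<ge> 2\<delta>\<close> that point is controlled by the oscillation of \<open>h\<close>
  on the cell of \<open>s\<close> and its two neighbours.\<close>

lemma rho1'_pointwise_le:
  assumes g: "g \<in> cadlag01" and h: "h \<in> cadlag01" and BV: "bounded_var_on (pval h) {0..1} V"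
    and rho: "rho1' g h < ereal \<delta>" and N: "N > 0" "2 * \<delta> \<le> 1 / real N"
    and s: "0 < s" "s < 1"
  shows "norm (g s - h s) \<le> \<delta> + step_fun N (neighbour_osc (pval h) N) s"
proof -
  obtain j where j: "j < N" "real j / real N \<le> s" "s < real (Suc j) / real N"
    by (rule grid_cell[OF N(1) less_imp_le[OF s(1)] s(2)])
  let ?R = "neighbour_osc (pval h) N j"
  obtain t x where tx: "t \<in> {0..1}" "\<bar>t - s\<bar> < \<delta>" "x \<in> closed_segment (lft h t) (h t)"
    "norm (g s - x) < \<delta>"
    by (rule rho1'_lessE_point[OF rho, of s]) (use s in auto)
  have "norm (x - pval h s) \<le> ?R"
  proof (rule cadlag01_segment_norm_le[OF h tx(1) _ _ tx(3)])
    show "0 < \<delta>" using tx(2) by linarith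
    fix u assume "u \<in> {0..1}" "\<bar>u - t\<bar> < \<delta>"
    moreover have "\<bar>u - s\<bar> < 1 / real N" using calculation(2) tx(2) N(2) by linarith
    ultimately show "norm (pval h u - pval h s) \<le> ?R"
      by (intro norm_le_neighbour_osc[OF BV N(1) j])
  qed
  then have "norm (g s - h s) \<le> \<delta> + ?R"
    using norm_triangle_ineq[of "g s - x" "x - h s"] tx(4) s by (simp add: pval_def)
  then show ?thesis using step_fun_eq[OF j] by simp
qed

lemma rho1'_set_integral_le:
  assumes g: "g \<in> cadlag01" and h: "h \<in> cadlag01" and BV: "bounded_var_on (pval h) {0..1} V"
    and rho: "rho1' g h < ereal \<delta>" and N: "N > 0" "2 * \<delta> \<le> 1 / real N"
    and N': "N' > 0" and c: "\<And>j. 0 \<le> c j"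
    and hH: "\<And>s. 0 < s \<Longrightarrow> s < 1 \<Longrightarrow> norm (h s - H s) \<le> step_fun N' c s"
  shows "(LINT s:{0..1}|lborel. norm (g s - H s)) \<le> 4 * V / real N + \<delta> + (\<Sum>j<N'. c j) / real N'"
proof -
  have "0 < \<delta>"
  proof (rule rho1'_lessE_point[OF rho, of 0])
    fix t assume "\<bar>t - 0\<bar> < \<delta>"
    then show "0 < \<delta>" by (simp add: abs_less_iff)
  qed simp
  define c' where "c' j = neighbour_osc (pval h) N j + \<delta>" for j
  have int: "set_integrable lborel {0..1} (\<lambda>s. step_fun N c' s + step_fun N' c s)"
    using set_integrable_step_fun[OF N(1)] set_integrable_step_fun[OF N'] by (rule set_integral_add)
  have "(LINT s:{0..1}|lborel. norm (g s - H s)) \<le> (LINT s:{0..1}|lborel. step_fun N c' s + step_fun N' c s)"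
  proof (rule set_integral_le_if_le_01[OF int])
    fix s :: real assume s: "0 < s" "s < 1"
    have "norm (g s - H s) \<le> norm (g s - h s) + norm (h s - H s)"
      using norm_triangle_ineq[of "g s - h s" "h s - H s"] by simp
    also have "\<dots> \<le> (\<delta> + step_fun N (neighbour_osc (pval h) N) s) + step_fun N' c s"
      using rho1'_pointwise_le[OF g h BV rho N s] hH[OF s] by (rule add_mono)
    also have "\<dots> = step_fun N c' s + step_fun N' c s"
      using step_fun_add_const[OF N(1)] s unfolding c'_def by simp
    finally show "norm (g s - H s) \<le> step_fun N c' s + step_fun N' c s" .
  next
    fix s :: real
    show "0 \<le> step_fun N c' s + step_fun N' c s"
      using neighbour_osc_nonneg[OF BV] \<open>0 < \<delta>\<close> c
      by (intro add_nonneg_nonneg step_fun_nonneg) (simp_all add: c'_def add_nonneg_nonneg)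
  qed
  also have "\<dots> = (\<Sum>j<N. neighbour_osc (pval h) N j) / real N + \<delta> + (\<Sum>j<N'. c j) / real N'"
    using set_integrable_step_fun[OF N(1)] set_integrable_step_fun[OF N'] N(1)
    by (simp add: set_integral_step_fun[OF N(1)] set_integral_step_fun[OF N'] c'_def
        sum.distrib add_divide_distrib)
  also have "\<dots> \<le> 4 * V / real N + \<delta> + (\<Sum>j<N'. c j) / real N'"
    using sum_neighbour_osc_le[OF BV N(1)] by (simp add: divide_right_mono)
  finally show ?thesis .
qed

section \<open>Helly selection\<close>

lemma convergent_subseq_on_Rats:
  fixes hs :: "nat \<Rightarrow> real \<Rightarrow> 'a::euclidean_space"
  assumes bd: "\<And>n t. norm (hs n t) \<le> V"
  obtains \<sigma> where "strict_mono \<sigma>" "\<And>q. q \<in> \<rat> \<Longrightarrow> convergent (\<lambda>k. hs (\<sigma> k) q)"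
proof -
  obtain m :: "real \<Rightarrow> nat" where "bij_betw m \<rat> UNIV"
    using countable_rat Rats_infinite by (erule countableE_infinite)
  then obtain r :: "nat \<Rightarrow> real" where r: "bij_betw r UNIV \<rat>"
    using bij_betw_inv by blast
  let ?P = "\<lambda>n s. convergent (\<lambda>k. hs (s k) (r n))"
  interpret nat: subseqs ?P
  proof (unfold subseqs_def, intro allI impI)
    fix n :: nat and s :: "nat \<Rightarrow> nat"
    have "bounded (range (\<lambda>k. hs (s k) (r n)))"
      using bd by (intro boundedI[of _ V]) auto
    then obtain l s' where "strict_mono s'" "((\<lambda>k. hs (s k) (r n)) \<circ> s') \<longlonglongrightarrow> l"
      using bounded_imp_convergent_subsequence by blast
    then show "\<exists>s'. strict_mono s' \<and> ?P n (s \<circ> s')"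
      by (intro exI[of _ s']) (auto simp: convergent_def comp_def)
  qed
  have "?P n nat.diagseq" for n
  proof -
    have "?P n (nat.diagseq \<circ> (+) (Suc n))"
      by (rule nat.diagseq_holds) (auto simp: comp_def dest: convergent_subseq_convergent)
    then obtain L where "(\<lambda>k. hs (nat.diagseq (Suc n + k)) (r n)) \<longlonglongrightarrow> L"
      by (auto simp: convergent_def comp_def)
    then have "(\<lambda>k. hs (nat.diagseq (k + Suc n)) (r n)) \<longlonglongrightarrow> L" by (simp add: add.commute)
    then have "(\<lambda>k. hs (nat.diagseq k) (r n)) \<longlonglongrightarrow> L" by (rule LIMSEQ_offset)
    then show ?thesis by (auto simp: convergent_def)
  qed
  moreover have "\<exists>n. r n = q" if "q \<in> \<rat>" for q
    using r that unfolding bij_betw_def by (metis rangeE)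
  ultimately show thesis using that[OF nat.subseq_diagseq] by metis
qed

lemma cadlag01_norm_le:
  assumes h: "h \<in> cadlag01" and BV: "bounded_var_on (pval h) {0..1} V"
  shows "norm (h t) \<le> V"
proof -
  have V: "0 \<le> V" by (rule bounded_var_on_nonneg[OF BV])
  have pos: "norm (h u) \<le> V" if "0 < u" "u \<le> 1" for u
    using bounded_var_on_dist[OF BV, of u 0] that by (simp add: pval_def)
  have "h 0 \<in> cball 0 V"
  proof (rule Lim_in_closed_set[OF closed_cball])
    show "(h \<longlongrightarrow> h 0) (at_right 0)" using h by (simp add: cadlag01_def continuous_within)
    have "\<forall>\<^sub>F u in at_right 0. u \<in> {0<..<1::real}" by (intro eventually_at_right_real) simp
    then show "\<forall>\<^sub>F u in at_right 0. h u \<in> cball 0 V"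
      by eventually_elim (use pos in simp)
  qed simp
  moreover have "h t = 0" if "t \<notin> {0..1}" using h that by (simp add: cadlag01_def)
  ultimately show ?thesis
    using pos[of t] V by (cases "t = 0"; cases "t \<in> {0..1}") auto
qed

definition rat01 :: "real set" where
  "rat01 = \<rat> \<inter> {0..1}"

lemma rat01_dense: "a < b \<Longrightarrow> 0 \<le> a \<Longrightarrow> b \<le> 1 \<Longrightarrow> \<exists>q\<in>rat01. a < q \<and> q < b"
  using Rats_dense_in_real[of a b] by (auto simp: rat01_def)

lemma grid_in_rat01: "N > 0 \<Longrightarrow> j \<le> N \<Longrightarrow> real j / real N \<in> rat01"
  by (auto simp: rat01_def field_simps)

lemma at_right_within_rat01_nontrivial:
  assumes "0 \<le> t" "t < 1"
  shows "at t within (rat01 \<inter> {t<..}) \<noteq> bot"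
proof -
  have "t islimpt (rat01 \<inter> {t<..})"
    unfolding islimpt_approachable_real
  proof (intro allI impI)
    fix \<epsilon> :: real assume "\<epsilon> > 0"
    then obtain q where "q \<in> rat01" "t < q" "q < min 1 (t + \<epsilon>)"
      using rat01_dense[of t "min 1 (t + \<epsilon>)"] assms by auto
    then show "\<exists>q\<in>rat01 \<inter> {t<..}. q \<noteq> t \<and> \<bar>q - t\<bar> < \<epsilon>"
      by (intro bexI[of _ q]) auto
  qed
  then show ?thesis by (simp add: trivial_limit_within)
qed

lemma rat01_seq_from_right:
  assumes "0 \<le> a" "a < b" "b \<le> 1"
  obtains r where "\<And>k. r k \<in> rat01" "\<And>k. a < r k" "\<And>k. r k < b" "r \<longlonglongrightarrow> a"
proof -
  have "\<exists>q\<in>rat01. a < q \<and> q < min b (a + 1 / (real k + 1))" for k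
    using assms by (intro rat01_dense) (auto simp: min_def)
  then obtain r where r: "\<And>k. r k \<in> rat01 \<and> a < r k \<and> r k < min b (a + 1 / (real k + 1))"
    by metis
  have "\<forall>k. a \<le> r k" "\<forall>k. r k \<le> a + 1 / (real k + 1)"
    using r by (simp_all add: less_imp_le)
  moreover have "(\<lambda>k. 1 / (real k + 1)) \<longlonglongrightarrow> 0"
    using LIMSEQ_inverse_real_of_nat by (simp add: inverse_eq_divide add.commute)
  then have "(\<lambda>k. a + 1 / (real k + 1)) \<longlonglongrightarrow> a"
    using tendsto_add[OF tendsto_const[of a]] by fastforce
  ultimately have lim: "r \<longlonglongrightarrow> a"
    by (rule tendsto_sandwich[OF always_eventually always_eventually tendsto_const])
  show thesis by (rule that[OF _ _ _ lim]) (use r in auto)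
qed

lemma rat01_seqs_from_right:
  assumes "sorted_wrt (<) p" "0 \<le> p ! 0" "p ! (length p - 1) \<le> 1"
  obtains r where "\<And>i k. Suc i < length p \<Longrightarrow> r i k \<in> rat01 \<and> p ! i < r i k \<and> r i k < p ! Suc i"
    "\<And>i. Suc i < length p \<Longrightarrow> r i \<longlonglongrightarrow> p ! i"
proof -
  have "\<exists>r. (\<forall>k. r k \<in> rat01 \<and> p ! i < r k \<and> r k < p ! Suc i) \<and> r \<longlonglongrightarrow> p ! i"
    if i: "Suc i < length p" for i
  proof -
    have "p ! 0 \<le> p ! i" "p ! Suc i \<le> p ! (length p - 1)"
      using assms(1) i by (simp_all add: strict_sorted_iff sorted_nth_mono)
    moreover have "p ! i < p ! Suc i" using assms(1) i by (simp add: sorted_wrt_iff_nth_less)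
    ultimately have "0 \<le> p ! i" "p ! i < p ! Suc i" "p ! Suc i \<le> 1" using assms(2,3) by auto
    then obtain r where "\<And>k. r k \<in> rat01" "\<And>k. p ! i < r k" "\<And>k. r k < p ! Suc i" "r \<longlonglongrightarrow> p ! i"
      by (rule rat01_seq_from_right) blast
    then show ?thesis by blast
  qed
  then show thesis using that by metis
qed

lemma rat01_partitions_from_right:
  assumes p: "sorted_wrt (<) p" "2 \<le> length p" "p ! 0 = 0" "p ! (length p - 1) = 1"
  obtains qs where "\<And>k. length (qs k) = length p" "\<And>k. sorted_wrt (<) (qs k)"
    "\<And>k. set (qs k) \<subseteq> rat01" "\<And>k. qs k ! 0 = 0" "\<And>k. qs k ! (length p - 1) = 1"
    "\<And>i. i < length p \<Longrightarrow> (\<lambda>k. qs k ! i) \<longlonglongrightarrow> p ! i"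
    "\<And>k i. 0 < i \<Longrightarrow> i < length p - 1 \<Longrightarrow> p ! i < qs k ! i"
proof -
  define m where "m = length p"
  obtain r where r: "\<And>i k. Suc i < m \<Longrightarrow> r i k \<in> rat01 \<and> p ! i < r i k \<and> r i k < p ! Suc i"
    and r_lim: "\<And>i. Suc i < m \<Longrightarrow> r i \<longlonglongrightarrow> p ! i"
    unfolding m_def by (rule rat01_seqs_from_right[OF p(1)]) (use p(3,4) in auto)
  have strict: "p ! i < p ! Suc i" if "Suc i < m" for i
    using p(1) that by (simp add: m_def sorted_wrt_iff_nth_less)
  define q where "q k i = (if 0 < i \<and> Suc i < m then r i k else p ! i)" for k i
  have q_ge: "p ! i \<le> q k i" for k i
    using r[of i k] by (simp add: q_def less_imp_le)
  have q_less: "q k i < p ! Suc i" if "Suc i < m" for k i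
  proof -
    have "p ! i < p ! Suc i" using strict[OF that] .
    then show ?thesis using r[of i k] that by (cases "i = 0") (simp_all add: q_def)
  qed
  have q_rat: "q k i \<in> rat01" if "i < m" for k i
  proof (cases "0 < i \<and> Suc i < m")
    case False
    then have "i = 0 \<or> i = m - 1" using that by linarith
    then show ?thesis using False p(3,4) by (auto simp: q_def m_def rat01_def)
  qed (use r[of i k] in \<open>simp add: q_def\<close>)
  have q_lim: "(\<lambda>k. q k i) \<longlonglongrightarrow> p ! i" for i
  proof (cases "0 < i \<and> Suc i < m")
    case False
    then have "q k i = p ! i" for k by (auto simp: q_def)
    then show ?thesis by simp
  qed (use r_lim[of i] in \<open>simp add: q_def\<close>)
  show thesis
  proof
    fix k
    have nth: "map (q k) [0..<m] ! i = q k i" if "i < m" for i using that by simp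
    show "length (map (q k) [0..<m]) = length p" by (simp add: m_def)
    have "q k i < q k (Suc i)" if "Suc i < m" for i
      using q_less[of i k] q_ge[of "Suc i" k] that by fastforce
    then show "sorted_wrt (<) (map (q k) [0..<m])"
      by (subst sorted_wrt_iff_nth_Suc_transp[OF transp_on_less]) simp
    show "set (map (q k) [0..<m]) \<subseteq> rat01" using q_rat by auto
    have "2 \<le> m" using p(2) by (simp add: m_def)
    then show "map (q k) [0..<m] ! 0 = 0" "map (q k) [0..<m] ! (length p - 1) = 1"
      using nth[of 0] nth[of "m - 1"] p(3,4) by (simp_all add: q_def flip: m_def)
  next
    fix i assume "i < length p"
    then show "(\<lambda>k. map (q k) [0..<m] ! i) \<longlonglongrightarrow> p ! i" using q_lim by (simp add: m_def)
  next
    fix k i assume "0 < i" "i < length p - 1"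
    then show "p ! i < map (q k) [0..<m] ! i" using r[of i k] by (simp add: q_def m_def)
  qed
qed

locale helly_subseq =
  fixes hs :: "nat \<Rightarrow> real \<Rightarrow> 'a::euclidean_space" and V :: real and \<sigma> :: "nat \<Rightarrow> nat"
  assumes cadlag: "\<And>n. hs n \<in> cadlag01"
    and bounded_var: "\<And>n. bounded_var_on (pval (hs n)) {0..1} V"
    and subseq: "strict_mono \<sigma>"
    and convergent: "\<And>q. q \<in> \<rat> \<Longrightarrow> convergent (\<lambda>k. hs (\<sigma> k) q)"
begin

definition rat_lim :: "real \<Rightarrow> 'a" where
  "rat_lim q = (if q = 0 then 0 else lim (\<lambda>k. hs (\<sigma> k) q))"

definition H :: "real \<Rightarrow> 'a" where
  "H t = (if 0 \<le> t \<and> t < 1 then Lim (at t within (rat01 \<inter> {t<..})) rat_lim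
          else if t = 1 then rat_lim 1 else 0)"

lemma rat_lim_tendsto: "q \<in> rat01 \<Longrightarrow> (\<lambda>k. pval (hs (\<sigma> k)) q) \<longlonglongrightarrow> rat_lim q"
  using convergent[of q] by (auto simp: pval_def rat_lim_def rat01_def convergent_LIMSEQ_iff)

lemma bounded_var_rat_lim: "bounded_var_on rat_lim rat01 V"
  unfolding bounded_var_on_def
proof (intro allI impI)
  fix xs assume xs: "sorted xs" "set xs \<subseteq> rat01"
  have "(\<lambda>k. list_var (pval (hs (\<sigma> k))) xs) \<longlonglongrightarrow> list_var rat_lim xs"
    using xs(2) by (intro list_var_tendsto rat_lim_tendsto) auto
  moreover have "list_var (pval (hs (\<sigma> k))) xs \<le> V" for k
    using bounded_var[of "\<sigma> k"] xs unfolding bounded_var_on_def rat01_def by auto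
  ultimately show "list_var rat_lim xs \<le> V" using LIMSEQ_le_const2 by blast
qed

lemma H_right_limit:
  assumes "0 \<le> t" "t < 1"
  shows "(rat_lim \<longlongrightarrow> H t) (at t within (rat01 \<inter> {t<..}))"
proof -
  obtain l where l: "(rat_lim \<longlongrightarrow> l) (at t within (rat01 \<inter> {t<..}))"
    using bounded_var_on_right_limit[OF bounded_var_rat_lim at_right_within_rat01_nontrivial[OF assms]]
    by blast
  moreover have "H t = l"
    using assms l at_right_within_rat01_nontrivial[OF assms] by (simp add: H_def tendsto_Lim)
  ultimately show ?thesis by simp
qed

lemma rat_lim_tendsto_H:
  assumes "0 \<le> t" "t < 1" "\<And>k. q k \<in> rat01" "\<And>k. t < q k" "q \<longlonglongrightarrow> t"
  shows "(\<lambda>k. rat_lim (q k)) \<longlonglongrightarrow> H t"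
proof -
  have "filterlim q (at t within (rat01 \<inter> {t<..})) sequentially"
    using assms(3-5) by (intro filterlim_at_withinI always_eventually) auto
  then show ?thesis by (rule filterlim_compose[OF H_right_limit[OF assms(1,2)]])
qed

lemma H_1: "(\<lambda>k. hs (\<sigma> k) 1) \<longlonglongrightarrow> H 1"
  using rat_lim_tendsto[of 1] by (simp add: H_def rat01_def pval_def)

lemma H_outside: "t \<notin> {0..1} \<Longrightarrow> H t = 0"
  by (auto simp: H_def)

lemma H_norm_le:
  assumes s: "0 \<le> s" "s < b" "b \<le> 1"
    and bound: "\<And>q. q \<in> rat01 \<Longrightarrow> s < q \<Longrightarrow> q < b \<Longrightarrow> norm (rat_lim q - c) \<le> e"
  shows "norm (H s - c) \<le> e"
proof -
  have s1: "s < 1" using s by simp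
  have "H s \<in> cball c e"
  proof (rule Lim_in_closed_set[OF closed_cball _ at_right_within_rat01_nontrivial[OF s(1) s1]
        H_right_limit[OF s(1) s1]])
    have "\<forall>\<^sub>F q in at s within (rat01 \<inter> {s<..}). q \<in> rat01 \<inter> {s<..}"
      by (simp add: eventually_at_filter)
    moreover have "\<forall>\<^sub>F q in at s within (rat01 \<inter> {s<..}). q < b"
      by (rule order_tendstoD(2)[OF tendsto_ident_at s(2)])
    ultimately show "\<forall>\<^sub>F q in at s within (rat01 \<inter> {s<..}). rat_lim q \<in> cball c e"
    proof eventually_elim
      case (elim q)
      then show ?case using bound[of q] by (simp add: dist_norm norm_minus_commute)
    qed
  qed
  then show ?thesis by (simp add: dist_norm norm_minus_commute)
qed

lemma H_continuous_right:
  assumes t: "0 \<le> t" "t < 1"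
  shows "continuous (at_right t) H"
  unfolding continuous_within
proof (rule tendstoI)
  fix \<epsilon> :: real assume "\<epsilon> > 0"
  have "\<forall>\<^sub>F q in at t within (rat01 \<inter> {t<..}). dist (rat_lim q) (H t) < \<epsilon> / 2"
    using H_right_limit[OF t] \<open>\<epsilon> > 0\<close> by (intro tendstoD) auto
  then obtain d where "d > 0" and d: "\<And>q. q \<in> rat01 \<inter> {t<..} \<Longrightarrow> q \<noteq> t \<Longrightarrow> dist q t < d \<Longrightarrow>
      dist (rat_lim q) (H t) < \<epsilon> / 2"
    unfolding eventually_at by blast
  have "\<forall>\<^sub>F s in at_right t. s \<in> {t<..<min (t + d) 1}"
    using \<open>d > 0\<close> t by (intro eventually_at_right_real) simp
  then show "\<forall>\<^sub>F s in at_right t. dist (H s) (H t) < \<epsilon>"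
  proof eventually_elim
    case (elim s)
    have "norm (H s - H t) \<le> \<epsilon> / 2"
    proof (rule H_norm_le[of s "min (t + d) 1"])
      fix q assume "q \<in> rat01" "s < q" "q < min (t + d) 1"
      then show "norm (rat_lim q - H t) \<le> \<epsilon> / 2"
        using elim d[of q] by (simp add: dist_real_def dist_norm)
    qed (use elim t in auto)
    then show ?case using \<open>\<epsilon> > 0\<close> by (simp add: dist_norm)
  qed
qed

lemma H_cadlag01:
  assumes BV: "bounded_var_on (pval H) {0..1} W"
  shows "H \<in> cadlag01"
proof -
  have "\<exists>l. (H \<longlongrightarrow> l) (at_left t)" if t: "0 < t" "t \<le> 1" for t
  proof -
    have "at t within ({0..1} \<inter> {..<t}) = at_left t"
      by (rule at_within_nhd[of _ "{0<..<2}"]) (use t in auto)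
    moreover have "at_left t \<noteq> (bot :: real filter)" by simp
    ultimately obtain l where "(pval H \<longlongrightarrow> l) (at_left t)"
      using bounded_var_on_left_limit[OF BV, of t] by auto
    moreover have "\<forall>\<^sub>F s in at_left t. pval H s = H s"
      using eventually_at_left_real[OF t(1)] by eventually_elim (simp add: pval_def)
    ultimately have "(H \<longlongrightarrow> l) (at_left t)" by (rule Lim_transform_eventually)
    then show ?thesis ..
  qed
  then show ?thesis
    using H_continuous_right H_outside by (auto simp: cadlag01_def)
qed

context
  fixes M :: "'b measure" and X :: "'b \<Rightarrow> 'a" and L :: real and e :: "nat \<Rightarrow> real"
  assumes prob: "prob_space M"
    and ID_le: "\<And>n. ID M X (hs n) \<le> ereal (L + e n)" and e: "e \<longlonglongrightarrow> 0"
begin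

lemma list_rate_rat_lim_le:
  assumes xs: "sorted_wrt (<) xs" "set xs \<subseteq> rat01" "0 \<in> set xs" "1 \<in> set xs"
  shows "list_rate M X rat_lim xs \<le> ereal L"
proof -
  have "list_rate M X rat_lim xs \<le> liminf (\<lambda>k. list_rate M X (pval (hs (\<sigma> k))) xs)"
    using xs by (intro list_rate_lsc[OF prob] rat_lim_tendsto) (auto simp: strict_sorted_iff)
  also have "\<dots> \<le> ereal L"
  proof (rule Liminf_le_of_tendsto_bound)
    show "list_rate M X (pval (hs (\<sigma> k))) xs \<le> ereal (L + e (\<sigma> k))" for k
      using xs ID_le[of "\<sigma> k"] by (intro order_trans[OF list_rate_le_ID]) (auto simp: rat01_def)
    show "(\<lambda>k. e (\<sigma> k)) \<longlonglongrightarrow> 0"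
      using LIMSEQ_subseq_LIMSEQ[OF e subseq] by (simp add: comp_def)
  qed
  finally show ?thesis .
qed

text \<open>Approximating a partition from the right by rational partitions, lower semicontinuity
  carries the bound over from \<^const>\<open>rat_lim\<close> to its right-continuous regularisation.\<close>

lemma list_rate_H_le:
  assumes T: "T \<in> fin_parts"
  shows "list_rate M X (pval H) (ppts T) \<le> ereal L"
proof -
  define p where "p = ppts T"
  have p: "sorted_wrt (<) p" "2 \<le> length p" "p ! 0 = 0" "p ! (length p - 1) = 1"
    using sorted_ppts[OF T] distinct_ppts[OF T] length_ppts[OF T] ppts_nth_0[OF T]
      ppts_nth_last[OF T] by (simp_all add: p_def strict_sorted_iff)
  obtain qs where len: "\<And>k. length (qs k) = length p" and qs: "\<And>k. sorted_wrt (<) (qs k)"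
    "\<And>k. set (qs k) \<subseteq> rat01" "\<And>k. qs k ! 0 = 0" "\<And>k. qs k ! (length p - 1) = 1"
    and lim: "\<And>i. i < length p \<Longrightarrow> (\<lambda>k. qs k ! i) \<longlonglongrightarrow> p ! i"
    and right: "\<And>k i. 0 < i \<Longrightarrow> i < length p - 1 \<Longrightarrow> p ! i < qs k ! i"
    using rat01_partitions_from_right[OF p] by blast
  have vals: "(\<lambda>k. rat_lim (qs k ! i)) \<longlonglongrightarrow> pval H (p ! i)" if i: "i < length p" for i
  proof -
    consider "i = 0" | "i = length p - 1" | "0 < i" "i < length p - 1" using i by linarith
    then show ?thesis
    proof cases
      case 3
      have "0 < p ! i" "p ! i < 1"
        using p(1,3,4) 3 by (auto simp: sorted_wrt_iff_nth_less dest: spec2[of _ 0 i] spec2[of _ i "length p - 1"])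
      moreover have "qs k ! i \<in> rat01" for k using qs(2)[of k] nth_mem[of i "qs k"] len[of k] i by auto
      ultimately show ?thesis
        using rat_lim_tendsto_H[of "p ! i" "\<lambda>k. qs k ! i"] right[OF 3] lim[OF i] by (simp add: pval_def)
    qed (use qs(3,4) p(3,4) in \<open>simp_all add: pval_def rat_lim_def H_def\<close>)
  qed
  have "list_rate M X (pval H) p \<le> liminf (\<lambda>k. list_rate M X rat_lim (qs k))"
    using p(1) qs(1) len lim vals
    by (intro list_rate_lsc[OF prob, of qs p "\<lambda>_. rat_lim"]) (auto simp: strict_sorted_iff)
  also have "\<dots> \<le> ereal L"
  proof (rule Liminf_le)
    have "0 \<in> set (qs k)" "1 \<in> set (qs k)" for k
    proof -
      have "0 < length (qs k)" "length p - 1 < length (qs k)" using len[of k] p(2) by auto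
      then show "0 \<in> set (qs k)" "1 \<in> set (qs k)" using nth_mem qs(3,4)[of k] by metis+
    qed
    then show "\<forall>\<^sub>F k in sequentially. list_rate M X rat_lim (qs k) \<le> ereal L"
      using qs(1,2) by (intro always_eventually allI list_rate_rat_lim_le)
  qed simp
  finally show ?thesis by (simp add: p_def)
qed

lemma ID_H_le: "ID M X H \<le> ereal L"
  unfolding ID_def rate_sum_eq_list_rate by (rule SUP_least) (rule list_rate_H_le)

end

end

context helly_subseq
begin

text \<open>On the cell of \<open>s\<close> with left end \<open>a\<close>, compare \<open>h(s)\<close>, \<open>h(a)\<close>, the rational limit at \<open>a\<close> and
  \<open>H(s)\<close>; the first and last differences are oscillations on the cell.\<close>

lemma dist_H_le_step_fun:
  assumes N: "N > 0"
  obtains c where "\<And>j. 0 \<le> c j"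
    "(\<Sum>j<N. c j) \<le> 2 * V + (\<Sum>j<N. norm (pval (hs (\<sigma> k)) (real j / real N) - rat_lim (real j / real N)))"
    "\<And>s. 0 < s \<Longrightarrow> s < 1 \<Longrightarrow> norm (hs (\<sigma> k) s - H s) \<le> step_fun N c s"
proof -
  let ?F = "pval (hs (\<sigma> k))" and ?a = "\<lambda>j::nat. real j / real N"
  define osc_Q where "osc_Q j = (if j < N then osc rat_lim rat01 (?a j) (?a (Suc j)) else 0)" for j
  define c where "c j = grid_osc ?F N j + norm (?F (?a j) - rat_lim (?a j)) + osc_Q j" for j
  have osc_Q: "0 \<le> osc_Q j" for j
    using osc_nonneg[OF bounded_var_rat_lim grid_in_rat01[OF N], of j "?a (Suc j)"]
    by (simp add: osc_Q_def divide_right_mono)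
  have "(\<Sum>j<N. grid_osc ?F N j) \<le> V" by (rule sum_grid_osc_le[OF bounded_var N])
  moreover have "(\<Sum>j<N. osc_Q j) \<le> V"
    using sum_osc_grid_le[OF bounded_var_rat_lim N grid_in_rat01[OF N]] by (simp add: osc_Q_def)
  ultimately have "(\<Sum>j<N. c j) \<le> 2 * V + (\<Sum>j<N. norm (?F (?a j) - rat_lim (?a j)))"
    by (simp add: c_def sum.distrib)
  moreover have "0 \<le> c j" for j
    using grid_osc_nonneg[OF bounded_var] osc_Q by (simp add: c_def add_nonneg_nonneg)
  moreover have "norm (hs (\<sigma> k) s - H s) \<le> step_fun N c s" if s: "0 < s" "s < 1" for s
  proof -
    obtain j where j: "j < N" "?a j \<le> s" "s < ?a (Suc j)"
      using grid_cell[OF N less_imp_le[OF s(1)] s(2)] .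
    have "?a (Suc j) \<le> 1" using j(1) by (simp add: field_simps)
    then have "norm (?F s - ?F (?a j)) \<le> grid_osc ?F N j"
      using j osc_ge[OF bounded_var, of s "?a j" "?a (Suc j)" "?a j"] s by (simp add: grid_osc_def)
    moreover have "norm (H s - rat_lim (?a j)) \<le> osc_Q j"
    proof (rule H_norm_le)
      fix q assume "q \<in> rat01" "s < q" "q < ?a (Suc j)"
      then show "norm (rat_lim q - rat_lim (?a j)) \<le> osc_Q j"
        using j grid_in_rat01[OF N, of j] osc_ge[OF bounded_var_rat_lim, of q "?a j" "?a (Suc j)" "?a j"]
        by (simp add: osc_Q_def)
    qed (use s j \<open>?a (Suc j) \<le> 1\<close> in auto)
    moreover have "norm (?F s - H s) \<le> norm (?F s - ?F (?a j)) + norm (?F (?a j) - rat_lim (?a j))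
        + norm (rat_lim (?a j) - H s)"
      using norm_triangle_ineq[of "?F s - ?F (?a j)" "?F (?a j) - rat_lim (?a j)"]
        norm_triangle_ineq[of "?F s - rat_lim (?a j)" "rat_lim (?a j) - H s"] by simp
    ultimately have "norm (?F s - H s) \<le> c j"
      unfolding c_def by (simp add: norm_minus_commute)
    then show ?thesis using step_fun_eq[OF j] s by (simp add: pval_def)
  qed
  ultimately show thesis using that by blast
qed

lemma H_step_fun_approx:
  assumes "\<epsilon> > 0"
  obtains N where "N > 0" "\<forall>\<^sub>F k in sequentially. \<exists>c. (\<forall>j. 0 \<le> c j) \<and> (\<Sum>j<N. c j) / real N < \<epsilon> \<and>
      (\<forall>s. 0 < s \<longrightarrow> s < 1 \<longrightarrow> norm (hs (\<sigma> k) s - H s) \<le> step_fun N c s)"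
proof -
  define N where "N = nat \<lceil>4 * V / \<epsilon>\<rceil> + 1"
  let ?a = "\<lambda>j::nat. real j / real N"
  have N: "N > 0" by (simp add: N_def)
  have "4 * V / \<epsilon> < real N" unfolding N_def by linarith
  then have NV: "2 * V / real N < \<epsilon> / 2" using \<open>\<epsilon> > 0\<close> N by (simp add: field_simps)
  define err where "err k = (\<Sum>j<N. norm (pval (hs (\<sigma> k)) (?a j) - rat_lim (?a j)))" for k
  have "(\<lambda>k. norm (pval (hs (\<sigma> k)) (?a j) - rat_lim (?a j))) \<longlonglongrightarrow> 0" if "j < N" for j
    using rat_lim_tendsto[OF grid_in_rat01[OF N less_imp_le[OF that]]]
    by (intro tendsto_norm_zero LIM_zero)
  then have "err \<longlonglongrightarrow> (\<Sum>j<N. 0)"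
    unfolding err_def by (intro tendsto_sum) auto
  then have "\<forall>\<^sub>F k in sequentially. err k < real N * \<epsilon> / 2"
    using N \<open>\<epsilon> > 0\<close> by (intro order_tendstoD(2)) auto
  then have "\<forall>\<^sub>F k in sequentially. \<exists>c. (\<forall>j. 0 \<le> c j) \<and> (\<Sum>j<N. c j) / real N < \<epsilon> \<and>
      (\<forall>s. 0 < s \<longrightarrow> s < 1 \<longrightarrow> norm (hs (\<sigma> k) s - H s) \<le> step_fun N c s)"
  proof eventually_elim
    case (elim k)
    obtain c where c: "\<And>j. 0 \<le> c j" "(\<Sum>j<N. c j) \<le> 2 * V + err k"
      "\<And>s. 0 < s \<Longrightarrow> s < 1 \<Longrightarrow> norm (hs (\<sigma> k) s - H s) \<le> step_fun N c s"
      using dist_H_le_step_fun[OF N, of k] unfolding err_def by blast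
    have "(\<Sum>j<N. c j) / real N < \<epsilon>"
      using c(2) elim N NV by (simp add: field_simps)
    then show ?case using c by blast
  qed
  then show thesis using that[OF N] by blast
qed

lemma rho_star_to_H:
  assumes gs: "\<And>n. gs n \<in> cadlag01" and rho: "\<And>n. rho1' (gs n) (hs n) < ereal (d n)"
    and d: "d \<longlonglongrightarrow> 0" and "\<epsilon> > 0"
  shows "\<exists>n. rho_star (gs n) H < ereal \<epsilon>"
proof -
  define N where "N = nat \<lceil>32 * V / \<epsilon>\<rceil> + 1"
  have N: "N > 0" by (simp add: N_def)
  have "32 * V / \<epsilon> < real N" unfolding N_def by linarith
  then have NV: "4 * V / real N < \<epsilon> / 8" using \<open>\<epsilon> > 0\<close> N by (simp add: field_simps)
  obtain N' where N': "N' > 0" and approx: "\<forall>\<^sub>F k in sequentially. \<exists>c. (\<forall>j. 0 \<le> c j) \<and>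
      (\<Sum>j<N'. c j) / real N' < \<epsilon> / 8 \<and>
      (\<forall>s. 0 < s \<longrightarrow> s < 1 \<longrightarrow> norm (hs (\<sigma> k) s - H s) \<le> step_fun N' c s)"
    using H_step_fun_approx[of "\<epsilon> / 8"] \<open>\<epsilon> > 0\<close> by auto
  have "(\<lambda>k. d (\<sigma> k)) \<longlonglongrightarrow> 0"
    using LIMSEQ_subseq_LIMSEQ[OF d subseq] by (simp add: comp_def)
  then have "\<forall>\<^sub>F k in sequentially. d (\<sigma> k) < min (1 / (2 * real N)) (\<epsilon> / 8)"
    using N \<open>\<epsilon> > 0\<close> by (intro order_tendstoD(2)) auto
  moreover have "\<forall>\<^sub>F k in sequentially. dist (hs (\<sigma> k) 1) (H 1) < \<epsilon> / 8"
    using H_1 \<open>\<epsilon> > 0\<close> by (intro tendstoD) auto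
  ultimately obtain k where "\<exists>c. (\<forall>j. 0 \<le> c j) \<and> (\<Sum>j<N'. c j) / real N' < \<epsilon> / 8 \<and>
      (\<forall>s. 0 < s \<longrightarrow> s < 1 \<longrightarrow> norm (hs (\<sigma> k) s - H s) \<le> step_fun N' c s)"
    and k: "d (\<sigma> k) < min (1 / (2 * real N)) (\<epsilon> / 8)" "dist (hs (\<sigma> k) 1) (H 1) < \<epsilon> / 8"
    using eventually_happens'[OF sequentially_bot eventually_conj[OF approx eventually_conj]] by blast
  then obtain c where c: "\<And>j. 0 \<le> c j" "(\<Sum>j<N'. c j) / real N' < \<epsilon> / 8"
      "\<And>s. 0 < s \<Longrightarrow> s < 1 \<Longrightarrow> norm (hs (\<sigma> k) s - H s) \<le> step_fun N' c s"
    by blast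
  have "2 * d (\<sigma> k) \<le> 1 / real N" using k(1) N by (simp add: field_simps)
  then have "(LINT s:{0..1}|lborel. norm (gs (\<sigma> k) s - H s))
      \<le> 4 * V / real N + d (\<sigma> k) + (\<Sum>j<N'. c j) / real N'"
    by (rule rho1'_set_integral_le[OF gs cadlag bounded_var rho N _ N' c(1) c(3)])
  moreover have "norm (gs (\<sigma> k) 1 - H 1) < d (\<sigma> k) + \<epsilon> / 8"
    using rho1'_dist_at_1[OF gs[of "\<sigma> k"] cadlag[of "\<sigma> k"] rho[of "\<sigma> k"]] k(2)
      norm_triangle_ineq[of "gs (\<sigma> k) 1 - hs (\<sigma> k) 1" "hs (\<sigma> k) 1 - H 1"]
    by (simp add: dist_norm)
  moreover have "d (\<sigma> k) < \<epsilon> / 8" using k(1) by simp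
  ultimately have "(LINT s:{0..1}|lborel. norm (gs (\<sigma> k) s - H s)) + norm (gs (\<sigma> k) 1 - H 1) < \<epsilon>"
    using NV c(2) \<open>\<epsilon> > 0\<close> by linarith
  then have "rho_star (gs (\<sigma> k)) H < ereal \<epsilon>" by (simp add: rho_star_def)
  then show ?thesis ..
qed

end

lemma exists_rho_star_limit:
  fixes M :: "'b measure" and X :: "'b \<Rightarrow> 'a::euclidean_space" and hs gs :: "nat \<Rightarrow> real \<Rightarrow> 'a"
  assumes prob: "prob_space M" and DL: "0 \<in> interior (DL M X)"
    and hs: "\<And>n. hs n \<in> BV01" and ID: "\<And>n. ID M X (hs n) \<le> ereal (L + 1 / (real n + 1))"
    and gs: "\<And>n. gs n \<in> cadlag01" and rho: "\<And>n. rho1' (gs n) (hs n) < ereal (1 / (real n + 1))"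
  obtains h where "h \<in> BV01" "ID M X h \<le> ereal L" "\<And>\<epsilon>. \<epsilon> > 0 \<Longrightarrow> \<exists>n. rho_star (gs n) h < ereal \<epsilon>"
proof -
  obtain c C where c: "c > 0" and I: "\<And>v. ereal (c * norm v - C) \<le> Irate M X v"
    using Irate_ge_linear[OF DL] by blast
  define V where "V = (L + 1 + C) / c"
  have hs_cadlag: "hs n \<in> cadlag01" for n using hs by (simp add: BV01_def)
  have BV: "bounded_var_on (pval (hs n)) {0..1} V" for n
  proof -
    have "ID M X (hs n) \<le> ereal (L + 1)"
      using ID[of n] by (rule order_trans) (simp add: field_simps)
    then show ?thesis unfolding V_def by (intro bounded_var_on_if_Var_le Var_le_if_ID_le[OF I c])
  qed
  obtain \<sigma> where "strict_mono \<sigma>" "\<And>q. q \<in> \<rat> \<Longrightarrow> convergent (\<lambda>k. hs (\<sigma> k) q)"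
    using convergent_subseq_on_Rats[of hs V] cadlag01_norm_le[OF hs_cadlag BV] by blast
  then interpret helly_subseq hs V \<sigma>
    using hs_cadlag BV by unfold_locales
  have e: "(\<lambda>n. 1 / (real n + 1)) \<longlonglongrightarrow> 0"
    using LIMSEQ_inverse_real_of_nat by (simp add: inverse_eq_divide add.commute)
  have IDH: "ID M X H \<le> ereal L" by (rule ID_H_le[OF prob ID e])
  then have "Var H \<le> ereal ((L + C) / c)" by (rule Var_le_if_ID_le[OF I c])
  then have "H \<in> BV01"
    using H_cadlag01[OF bounded_var_on_if_Var_le] by (auto simp: BV01_def)
  then show thesis using that IDH rho_star_to_H[OF gs rho e] by blast
qed

lemma mnbhd_mono: "\<epsilon> \<le> \<epsilon>' \<Longrightarrow> mnbhd \<rho> S B \<epsilon> \<subseteq> mnbhd \<rho> S B \<epsilon>'"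
  unfolding mnbhd_def using order.strict_trans2[of "\<rho> _ _" "ereal \<epsilon>" "ereal \<epsilon>'"] by force

lemma mclosure_subset_mnbhd: "\<epsilon> > 0 \<Longrightarrow> mclosure \<rho> S B \<subseteq> mnbhd \<rho> S B \<epsilon>"
  by (auto simp: mclosure_def mnbhd_def)

lemma tendsto_SUP_at_right_0:
  fixes f :: "real \<Rightarrow> 'a::{complete_linorder, linorder_topology}"
  assumes anti: "\<And>\<epsilon> \<epsilon>'. 0 < \<epsilon> \<Longrightarrow> \<epsilon> \<le> \<epsilon>' \<Longrightarrow> f \<epsilon>' \<le> f \<epsilon>"
  shows "(f \<longlongrightarrow> (SUP \<epsilon>\<in>{0<..}. f \<epsilon>)) (at_right 0)"
proof (rule order_tendstoI)
  fix y assume "y < (SUP \<epsilon>\<in>{0<..}. f \<epsilon>)"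
  then obtain \<epsilon>\<^sub>0 where "\<epsilon>\<^sub>0 > 0" "y < f \<epsilon>\<^sub>0" by (auto simp: less_SUP_iff)
  have "\<forall>\<^sub>F \<epsilon> in at_right 0. \<epsilon> \<in> {0<..<\<epsilon>\<^sub>0}" by (rule eventually_at_right_real) fact
  then show "\<forall>\<^sub>F \<epsilon> in at_right 0. y < f \<epsilon>"
  proof eventually_elim
    case (elim \<epsilon>)
    then have "f \<epsilon>\<^sub>0 \<le> f \<epsilon>" by (intro anti) auto
    with \<open>y < f \<epsilon>\<^sub>0\<close> show ?case by (rule order.strict_trans2)
  qed
next
  fix y assume "(SUP \<epsilon>\<in>{0<..}. f \<epsilon>) < y"
  moreover have "\<forall>\<^sub>F \<epsilon> in at_right (0::real). 0 < \<epsilon>" by (rule eventually_at_right_less)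
  then have "\<forall>\<^sub>F \<epsilon> in at_right 0. f \<epsilon> \<le> (SUP \<epsilon>\<in>{0<..}. f \<epsilon>)"
    by eventually_elim (rule SUP_upper, simp)
  ultimately show "\<forall>\<^sub>F \<epsilon> in at_right 0. f \<epsilon> < y"
    by (auto elim: eventually_mono intro: order.strict_trans1)
qed

lemma subset_mclosure_rho_star: "B \<subseteq> BV01 \<Longrightarrow> B \<subseteq> mclosure rho_star BV01 B"
  by (auto simp: mclosure_def rho_star_def intro!: bexI)

lemma mclosure_ID_le:
  fixes M :: "'b measure" and X :: "'b \<Rightarrow> 'a::euclidean_space"
  assumes prob: "prob_space M" and DL: "0 \<in> interior (DL M X)" and B: "B \<subseteq> BV01"
    and clo: "mclosure rho1' BV01 B = mclosure rho_star BV01 B"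
    and L: "L \<noteq> \<infinity>" "\<And>\<epsilon>. \<epsilon> > 0 \<Longrightarrow> (INF h\<in>mnbhd rho1' BV01 B \<epsilon>. ID M X h) \<le> L"
  obtains h where "h \<in> mclosure rho1' BV01 B" "ID M X h \<le> L"
proof -
  have "0 \<le> (INF h\<in>mnbhd rho1' BV01 B 1. ID M X h)" by (intro INF_greatest ID_nonneg[OF prob])
  then obtain l where l: "L = ereal l" using L order_trans[of 0 _ L] by (cases L) fastforce+
  have "\<exists>h g. h \<in> BV01 \<and> g \<in> B \<and> rho1' g h < ereal (1 / (real n + 1))
      \<and> ID M X h \<le> ereal (l + 1 / (real n + 1))" for n
  proof -
    have "(INF h\<in>mnbhd rho1' BV01 B (1 / (real n + 1)). ID M X h) < ereal (l + 1 / (real n + 1))"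
      using L(2)[of "1 / (real n + 1)"] unfolding l by (simp add: order.strict_trans1)
    then show ?thesis by (auto simp: INF_less_iff mnbhd_def intro: less_imp_le)
  qed
  then obtain hs gs where hs: "\<And>n. hs n \<in> BV01" and gs: "\<And>n. gs n \<in> B"
    and rho: "\<And>n. rho1' (gs n) (hs n) < ereal (1 / (real n + 1))"
    and ID: "\<And>n. ID M X (hs n) \<le> ereal (l + 1 / (real n + 1))"
    by metis
  have "gs n \<in> cadlag01" for n using gs[of n] B by (auto simp: BV01_def)
  then obtain h where "h \<in> BV01" "ID M X h \<le> ereal l" "\<And>\<epsilon>. \<epsilon> > 0 \<Longrightarrow> \<exists>n. rho_star (gs n) h < ereal \<epsilon>"
    using exists_rho_star_limit[OF prob DL hs ID _ rho] by blast
  moreover from this have "h \<in> mclosure rho_star BV01 B" using gs by (auto simp: mclosure_def)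
  ultimately show thesis using that clo l by simp
qed

lemma mclosure_ID_le_SUP:
  fixes M :: "'b measure" and X :: "'b \<Rightarrow> 'a::euclidean_space" and B :: "(real \<Rightarrow> 'a) set"
  defines "L \<equiv> (SUP \<epsilon>\<in>{0<..}. INF h\<in>mnbhd rho1' BV01 B \<epsilon>. ID M X h)"
  assumes "prob_space M" "0 \<in> interior (DL M X)" "B \<subseteq> BV01"
    and clo: "mclosure rho1' BV01 B = mclosure rho_star BV01 B"
    and "B \<noteq> {} \<or> L \<noteq> \<infinity>"
  shows "\<exists>h\<in>mclosure rho1' BV01 B. ID M X h \<le> L"
proof (cases "L = \<infinity>")
  case True
  then show ?thesis using assms(5,6) subset_mclosure_rho_star[OF assms(4)] by auto
next
  case False
  have "(INF h\<in>mnbhd rho1' BV01 B \<epsilon>. ID M X h) \<le> L" if "\<epsilon> > 0" for \<epsilon>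
    unfolding L_def using that by (intro SUP_upper) simp
  then show ?thesis using mclosure_ID_le[OF assms(2-5) False] by blast
qed

theorem proposition5p4:
  fixes M :: "'b measure" and X :: "'b \<Rightarrow> 'a::euclidean_space"
    and B :: "(real \<Rightarrow> 'a) set"
  assumes "prob_space M"
    and "X \<in> borel_measurable M"
    and "0 \<in> interior (DL M X)"
    and "B \<subseteq> BV01"
    and "mclosure rho1' BV01 B = mclosure rho_star BV01 B"
  shows "((\<lambda>\<epsilon>. INF h\<in>mnbhd rho1' BV01 B \<epsilon>. ID M X h)
            \<longlongrightarrow> (INF h\<in>mclosure rho1' BV01 B. ID M X h)) (at_right 0)
         \<and> (B \<noteq> {} \<longrightarrow> (\<exists>h\<in>mclosure rho1' BV01 B.
               ID M X h = (INF g\<in>mclosure rho1' BV01 B. ID M X g)))"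
proof -
  define f where "f \<epsilon> = (INF h\<in>mnbhd rho1' BV01 B \<epsilon>. ID M X h)" for \<epsilon>
  define L where "L = (SUP \<epsilon>\<in>{0<..}. f \<epsilon>)"
  define C where "C = (INF h\<in>mclosure rho1' BV01 B. ID M X h)"
  have lim: "(f \<longlongrightarrow> L) (at_right 0)"
    unfolding L_def f_def by (intro tendsto_SUP_at_right_0 INF_superset_mono mnbhd_mono) auto
  have "L \<le> C"
    unfolding L_def f_def C_def by (intro SUP_least INF_superset_mono mclosure_subset_mnbhd) auto
  have approx: "\<exists>h\<in>mclosure rho1' BV01 B. ID M X h \<le> L" if "B \<noteq> {} \<or> L \<noteq> \<infinity>"
    using mclosure_ID_le_SUP[OF assms(1,3-5)] that unfolding L_def f_def by blast
  have "C \<le> L" using approx by (cases "L = \<infinity>") (auto simp: C_def intro: INF_lower2)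
  with \<open>L \<le> C\<close> have "L = C" by simp
  moreover have "\<exists>h\<in>mclosure rho1' BV01 B. ID M X h = C" if "B \<noteq> {}"
    using approx that \<open>L = C\<close> by (auto simp: C_def intro: antisym INF_lower)
  ultimately show ?thesis using lim unfolding f_def C_def by auto
qed

end
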